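(* Let $\mathcal P$ be a GTDS instance with rational discount factor $\lambda$, rational weights $a_1,\dots,a_k$, and rational target $t$. If $\mathcal P$ has no solution, then the $<$-universality and $\le$-universality problems with threshold $t$ are decidable over the class of discounted-sum automata over finite words (resp. over infinite words) with discount factor $\lambda$ and all transition weights in $\{a_1,\dots,a_k\}$.
   Context: An instance of GTDS consists of a rational discount factor $0<\lambda<1$, a rational target $t$, and rational weights $a_1,\dots,a_k$; a solution is an infinite $w\in\{a_1,\dots,a_k\}^\omega$ with $\sum_{i=0}^\infty w(i)\lambda^i=t$. A discounted-sum automaton (DSA) is $\langle\Sigma,Q,q_{in},Q_F,\delta,\gamma,\lambda\rangle$ with finite alphabet, finite state set $Q$, initial state $q_{in}$, accepting states $Q_F$, transition relation $\delta\subseteq Q\times\Sigma\times Q$, weights $\gamma:\delta\to\mathbb Q$, discount factor $\lambda$. A run on a word $\sigma_1\sigma_2\cdots$ is $q_0,\sigma_1,q_1,\dots$ with $q_0=q_{in}$, $(q_i,\sigma_{i+1},q_{i+1})\in\delta$; a finite run is accepting if it ends in $Q_F$, and every infinite run is accepting; a run's value is $\sum_i\lambda^i\gamma(q_i,\sigma_{i+1},q_{i+1})$; $\mathcal A(w)$ is the infimum of values of accepting runs on $w$. The $<$-universality (resp. $\le$-universality) problem with threshold $t$ asks whether $\mathcal A(w)<t$ (resp. $\mathcal A(w)\le t$) for every word $w$ (finite words for finite-word automata, infinite words for infinite-word automata). *)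

theory Defs
  imports Complex_Main "HOL-Library.Nat_Bijection" "HOL-Library.Extended_Real"
begin

datatype recf = Zero | Succ | Proj nat | Comp recf "recf list"
  | PrimRec recf recf | Minim recf

inductive reval :: "recf \<Rightarrow> nat list \<Rightarrow> nat \<Rightarrow> bool" where
  zero: "reval Zero xs 0"
| succ: "reval Succ (x # xs) (Suc x)"
| proj: "i < length xs \<Longrightarrow> reval (Proj i) xs (xs ! i)"
| comp: "list_all2 (\<lambda>g y. reval g xs y) gs ys \<Longrightarrow> reval f ys z \<Longrightarrow> reval (Comp f gs) xs z"
| prim0: "reval f xs y \<Longrightarrow> reval (PrimRec f g) (0 # xs) y"
| primS: "reval (PrimRec f g) (n # xs) y \<Longrightarrow> reval g (n # y # xs) z
          \<Longrightarrow> reval (PrimRec f g) (Suc n # xs) z"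
| minim: "reval f (n # xs) 0 \<Longrightarrow> (\<forall>m<n. \<exists>y. y > 0 \<and> reval f (m # xs) y)
          \<Longrightarrow> reval (Minim f) xs n"

definition decidable_set :: "nat set \<Rightarrow> bool" where
  "decidable_set A \<longleftrightarrow> (\<exists>f. \<forall>n. reval f [n] (if n \<in> A then 1 else 0))"

text \<open>An automaton is given by its
  alphabet (a finite list of letters), its initial state, its accepting states,
  and a finite table mapping transitions (p, sigma, q) to an index i of the
  weight a_i in the fixed weight list.  Every value of this type is thus a DSA
  whose weights lie in the given weight set, and every such DSA (up to renaming
  of states and letters) arises this way.\<close>
record dsa =
  alph :: "nat list"
  init :: nat
  final :: "nat list"
  tab :: "((nat \<times> nat \<times> nat) \<times> nat) list"

definition delta :: "real list \<Rightarrow> dsa \<Rightarrow> (nat \<times> nat \<times> nat) set" where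
  "delta as A = {tr. \<exists>i. map_of (tab A) tr = Some i \<and> i < length as}"

definition gamma :: "real list \<Rightarrow> dsa \<Rightarrow> nat \<times> nat \<times> nat \<Rightarrow> real" where
  "gamma as A tr = as ! the (map_of (tab A) tr)"

text \<open>Finite runs on a finite word w (the run is rho 0, ..., rho (length w)).\<close>
definition fin_run :: "real list \<Rightarrow> dsa \<Rightarrow> nat list \<Rightarrow> (nat \<Rightarrow> nat) \<Rightarrow> bool" where
  "fin_run as A w \<rho> \<longleftrightarrow> \<rho> 0 = init A \<and>
     (\<forall>i < length w. (\<rho> i, w ! i, \<rho> (Suc i)) \<in> delta as A)"

definition fin_accepting :: "real list \<Rightarrow> dsa \<Rightarrow> nat list \<Rightarrow> (nat \<Rightarrow> nat) \<Rightarrow> bool" where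
  "fin_accepting as A w \<rho> \<longleftrightarrow> fin_run as A w \<rho> \<and> \<rho> (length w) \<in> set (final A)"

definition fin_value :: "real \<Rightarrow> real list \<Rightarrow> dsa \<Rightarrow> nat list \<Rightarrow> (nat \<Rightarrow> nat) \<Rightarrow> real" where
  "fin_value lam as A w \<rho> = (\<Sum>i<length w. lam ^ i * gamma as A (\<rho> i, w ! i, \<rho> (Suc i)))"

text \<open>Value of the automaton on a finite word: infimum over accepting runs
  (+infinity if there is none).\<close>
definition fin_aut_val :: "real \<Rightarrow> real list \<Rightarrow> dsa \<Rightarrow> nat list \<Rightarrow> ereal" where
  "fin_aut_val lam as A w =
     Inf {ereal (fin_value lam as A w \<rho>) | \<rho>. fin_accepting as A w \<rho>}"

text \<open>Infinite runs on an infinite word w; every infinite run is accepting.\<close>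
definition inf_run :: "real list \<Rightarrow> dsa \<Rightarrow> (nat \<Rightarrow> nat) \<Rightarrow> (nat \<Rightarrow> nat) \<Rightarrow> bool" where
  "inf_run as A w \<rho> \<longleftrightarrow> \<rho> 0 = init A \<and> (\<forall>i. (\<rho> i, w i, \<rho> (Suc i)) \<in> delta as A)"

definition inf_value :: "real \<Rightarrow> real list \<Rightarrow> dsa \<Rightarrow> (nat \<Rightarrow> nat) \<Rightarrow> (nat \<Rightarrow> nat) \<Rightarrow> real" where
  "inf_value lam as A w \<rho> = (\<Sum>i. lam ^ i * gamma as A (\<rho> i, w i, \<rho> (Suc i)))"

definition inf_aut_val :: "real \<Rightarrow> real list \<Rightarrow> dsa \<Rightarrow> (nat \<Rightarrow> nat) \<Rightarrow> ereal" where
  "inf_aut_val lam as A w =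
     Inf {ereal (inf_value lam as A w \<rho>) | \<rho>. inf_run as A w \<rho>}"

definition fin_words :: "dsa \<Rightarrow> nat list set" where
  "fin_words A = {w. set w \<subseteq> set (alph A)}"

definition inf_words :: "dsa \<Rightarrow> (nat \<Rightarrow> nat) set" where
  "inf_words A = {w. \<forall>i. w i \<in> set (alph A)}"

definition fin_lt_universal :: "real \<Rightarrow> real list \<Rightarrow> real \<Rightarrow> dsa \<Rightarrow> bool" where
  "fin_lt_universal lam as t A \<longleftrightarrow> (\<forall>w \<in> fin_words A. fin_aut_val lam as A w < ereal t)"

definition fin_le_universal :: "real \<Rightarrow> real list \<Rightarrow> real \<Rightarrow> dsa \<Rightarrow> bool" where
  "fin_le_universal lam as t A \<longleftrightarrow> (\<forall>w \<in> fin_words A. fin_aut_val lam as A w \<le> ereal t)"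

definition inf_lt_universal :: "real \<Rightarrow> real list \<Rightarrow> real \<Rightarrow> dsa \<Rightarrow> bool" where
  "inf_lt_universal lam as t A \<longleftrightarrow> (\<forall>w \<in> inf_words A. inf_aut_val lam as A w < ereal t)"

definition inf_le_universal :: "real \<Rightarrow> real list \<Rightarrow> real \<Rightarrow> dsa \<Rightarrow> bool" where
  "inf_le_universal lam as t A \<longleftrightarrow> (\<forall>w \<in> inf_words A. inf_aut_val lam as A w \<le> ereal t)"

definition dec_entry :: "nat \<Rightarrow> (nat \<times> nat \<times> nat) \<times> nat" where
  "dec_entry n = (case prod_decode n of (p, r1) \<Rightarrow>
     (case prod_decode r1 of (s, r2) \<Rightarrow>
       (case prod_decode r2 of (q, i) \<Rightarrow> ((p, s, q), i))))"

definition dec_dsa :: "nat \<Rightarrow> dsa" where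
  "dec_dsa c = (case prod_decode c of (a, r1) \<Rightarrow>
     (case prod_decode r1 of (q0, r2) \<Rightarrow>
       (case prod_decode r2 of (f, tr) \<Rightarrow>
         \<lparr>alph = list_decode a, init = q0, final = list_decode f,
          tab = map dec_entry (list_decode tr)\<rparr>)))"

definition decidable_dsa_prop :: "(dsa \<Rightarrow> bool) \<Rightarrow> bool" where
  "decidable_dsa_prop P \<longleftrightarrow> decidable_set {c. P (dec_dsa c)}"

definition gtds_solution :: "real \<Rightarrow> real \<Rightarrow> real list \<Rightarrow> (nat \<Rightarrow> real) \<Rightarrow> bool" where
  "gtds_solution lam t as w \<longleftrightarrow> (\<forall>i. w i \<in> set as) \<and> (\<lambda>i. w i * lam ^ i) sums t"

end

theory Submission
  imports Defs
begin

text \<open>Since the GTDS instance has no solution, a Koenig argument over the finitely branching tree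
  of weight sequences shows that all their discounted sums stay at distance at least some eps > 0
  from t.  Fix N so large that the weights after position N change a discounted sum by less than
  eps / 3.  Whether the value of a run lies below (or at most) t is then determined by its first N
  weights, and for infinite runs the strict and the non-strict comparison agree.  Universality
  thus asks whether every word has a run whose first N weights form one of finitely many good
  prefixes.  The set of pairs (state, prefix) reached on a word is a right-invariant function of
  the word with finitely many values, so a counterexample can be shortened below a bound
  computable from the automaton, and for infinite words Koenig's lemma reduces the question to
  finite words.  The resulting predicate on codes of automata is a bounded quantification over
  codes of words and runs, hence recursive.\<close>

section \<open>Computable functions of finitely many arguments\<close>

text \<open>A function of n arguments receives them as an environment e whose first n entries
  matter.  Binders (recursion, bounded sums and quantifiers) push their bound variable as
  entry 0, so their bodies are stated in the form F (e 0) (\<lambda>i. e (Suc i)).\<close>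

definition computable :: "nat \<Rightarrow> ((nat \<Rightarrow> nat) \<Rightarrow> nat) \<Rightarrow> bool" where
  "computable n f \<longleftrightarrow> (\<forall>e e'. (\<forall>i<n. e i = e' i) \<longrightarrow> f e = f e') \<and>
     (\<exists>r. \<forall>xs. length xs = n \<longrightarrow> reval r xs (f (\<lambda>i. xs ! i)))"

definition computable_pred :: "nat \<Rightarrow> ((nat \<Rightarrow> nat) \<Rightarrow> bool) \<Rightarrow> bool" where
  "computable_pred n P \<longleftrightarrow> computable n (\<lambda>e. if P e then 1 else 0)"

named_theorems computable_intros

lemma computable_args_cong: "computable n f \<Longrightarrow> (\<And>i. i < n \<Longrightarrow> e i = e' i) \<Longrightarrow> f e = f e'"
  unfolding computable_def by blast

lemma computable_cong: "computable n f \<Longrightarrow> (\<And>e. f e = g e) \<Longrightarrow> computable n g"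
  by (metis ext)

lemma computable_pred_cong: "computable_pred n P \<Longrightarrow> (\<And>e. P e = Q e) \<Longrightarrow> computable_pred n Q"
  unfolding computable_pred_def by (rule computable_cong) auto

lemma computable_compose:
  assumes f: "computable m f" and g: "\<And>j. j < m \<Longrightarrow> computable n (g j)"
  shows "computable n (\<lambda>e. f (\<lambda>j. g j e))"
proof -
  from f obtain r where r: "\<forall>xs. length xs = m \<longrightarrow> reval r xs (f (\<lambda>i. xs ! i))"
    unfolding computable_def by blast
  have "\<forall>j<m. \<exists>r. \<forall>xs. length xs = n \<longrightarrow> reval r xs (g j (\<lambda>i. xs ! i))"
    using g unfolding computable_def by blast
  then obtain R where R: "\<And>j xs. j < m \<Longrightarrow> length xs = n \<Longrightarrow> reval (R j) xs (g j (\<lambda>i. xs ! i))"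
    by metis
  show ?thesis unfolding computable_def
  proof (intro conjI allI impI)
    fix e e' :: "nat \<Rightarrow> nat" assume "\<forall>i<n. e i = e' i"
    then show "f (\<lambda>j. g j e) = f (\<lambda>j. g j e')"
      using computable_args_cong[OF f] computable_args_cong[OF g] by metis
  next
    show "\<exists>r. \<forall>xs. length xs = n \<longrightarrow> reval r xs (f (\<lambda>j. g j (\<lambda>i. xs ! i)))"
    proof (intro exI allI impI)
      fix xs :: "nat list" assume len: "length xs = n"
      let ?ys = "map (\<lambda>j. g j (\<lambda>i. xs ! i)) [0..<m]"
      have "list_all2 (\<lambda>r y. reval r xs y) (map R [0..<m]) ?ys"
        using R len by (auto simp: list_all2_conv_all_nth)
      moreover have "reval r ?ys (f (\<lambda>i. ?ys ! i))" using r by simp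
      moreover have "f (\<lambda>i. ?ys ! i) = f (\<lambda>j. g j (\<lambda>i. xs ! i))"
        by (rule computable_args_cong[OF f]) simp
      ultimately show "reval (Comp r (map R [0..<m])) xs (f (\<lambda>j. g j (\<lambda>i. xs ! i)))"
        using reval.comp by metis
    qed
  qed
qed

lemma computable_const [computable_intros]: "computable n (\<lambda>e. c)"
proof (induction c)
  case 0
  have "reval Zero xs 0" for xs by (rule reval.zero)
  then show ?case unfolding computable_def by blast
next
  case (Suc c)
  then obtain r where r: "\<forall>xs. length xs = n \<longrightarrow> reval r xs c" unfolding computable_def by auto
  have "reval (Comp Succ [r]) xs (Suc c)" if "length xs = n" for xs
    using r that reval.comp[of xs "[r]" "[c]" Succ "Suc c"] reval.succ[of c "[]"] by auto
  then show ?case unfolding computable_def by blast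
qed

lemma computable_arg [computable_intros]: "i < n \<Longrightarrow> computable n (\<lambda>e. e i)"
  unfolding computable_def using reval.proj by auto

lemma computable_Suc [computable_intros]: "computable n a \<Longrightarrow> computable n (\<lambda>e. Suc (a e))"
proof -
  have "reval Succ xs (Suc (xs ! 0))" if "length xs = 1" for xs
    using that reval.succ by (cases xs) auto
  then have "computable 1 (\<lambda>e. Suc (e 0))" unfolding computable_def by auto
  then show "computable n a \<Longrightarrow> computable n (\<lambda>e. Suc (a e))"
    using computable_compose[of 1 "\<lambda>e. Suc (e 0)" n "\<lambda>j. a"] by simp
qed

lemma computable_PrimRec:
  assumes f: "computable n f" and g: "computable (Suc (Suc n)) g"
  shows "computable (Suc n)
    (\<lambda>e. rec_nat (f (\<lambda>i. e (Suc i))) (\<lambda>k y. g (case_nat k (case_nat y (\<lambda>i. e (Suc i))))) (e 0))"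
    (is "computable _ ?h")
proof -
  from f obtain rf where rf: "\<forall>xs. length xs = n \<longrightarrow> reval rf xs (f (\<lambda>i. xs ! i))"
    unfolding computable_def by blast
  from g obtain rg where rg: "\<forall>xs. length xs = Suc (Suc n) \<longrightarrow> reval rg xs (g (\<lambda>i. xs ! i))"
    unfolding computable_def by blast
  show ?thesis unfolding computable_def
  proof (intro conjI allI impI)
    fix e e' :: "nat \<Rightarrow> nat" assume a: "\<forall>i<Suc n. e i = e' i"
    have "f (\<lambda>i. e (Suc i)) = f (\<lambda>i. e' (Suc i))"
      by (rule computable_args_cong[OF f]) (use a in auto)
    moreover have "(\<lambda>k y. g (case_nat k (case_nat y (\<lambda>i. e (Suc i))))) =
        (\<lambda>k y. g (case_nat k (case_nat y (\<lambda>i. e' (Suc i)))))"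
      by (intro ext computable_args_cong[OF g]) (use a in \<open>auto split: nat.split\<close>)
    ultimately show "?h e = ?h e'" using a by simp
  next
    show "\<exists>r. \<forall>xs. length xs = Suc n \<longrightarrow> reval r xs (?h (\<lambda>i. xs ! i))"
    proof (intro exI allI impI)
      fix xs :: "nat list" assume "length xs = Suc n"
      then obtain x ys where xs: "xs = x # ys" and ly: "length ys = n" by (cases xs) auto
      have "reval (PrimRec rf rg) (k # ys)
          (rec_nat (f (\<lambda>i. ys ! i)) (\<lambda>k y. g (case_nat k (case_nat y (\<lambda>i. ys ! i)))) k)" for k
      proof (induction k)
        case 0
        then show ?case using rf ly by (simp add: reval.prim0)
      next
        case (Suc k)
        let ?y = "rec_nat (f (\<lambda>i. ys ! i)) (\<lambda>k y. g (case_nat k (case_nat y (\<lambda>i. ys ! i)))) k"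
        have "reval rg (k # ?y # ys) (g (\<lambda>i. (k # ?y # ys) ! i))" using rg ly by simp
        moreover have "g (\<lambda>i. (k # ?y # ys) ! i) = g (case_nat k (case_nat ?y (\<lambda>i. ys ! i)))"
          by (rule computable_args_cong[OF g]) (auto simp: nth_Cons split: nat.split)
        ultimately show ?case using Suc reval.primS by fastforce
      qed
      then show "reval (PrimRec rf rg) xs (?h (\<lambda>i. xs ! i))" unfolding xs by simp
    qed
  qed
qed

lemma computable_rec_nat:
  assumes a: "computable n a" and b: "computable n b"
    and G: "computable (Suc (Suc n)) (\<lambda>e. G (e 0) (e 1) (\<lambda>i. e (Suc (Suc i))))"
  shows "computable n (\<lambda>e. rec_nat (b e) (\<lambda>k y. G k y e) (a e))"
proof -
  have "computable (Suc n) (\<lambda>e. rec_nat (b (\<lambda>i. e (Suc i)))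
      (\<lambda>k y. G k y (\<lambda>i. e (Suc i))) (e 0))"
    using computable_PrimRec[OF b G] by simp
  moreover have "computable n (case_nat a (\<lambda>i e. e i) j)" if "j < Suc n" for j
    using that a by (cases j) (auto intro: computable_arg)
  ultimately have "computable n (\<lambda>e. rec_nat (b (\<lambda>i. case_nat a (\<lambda>i e. e i) (Suc i) e))
      (\<lambda>k y. G k y (\<lambda>i. case_nat a (\<lambda>i e. e i) (Suc i) e)) (case_nat a (\<lambda>i e. e i) 0 e))"
    by (rule computable_compose[where g = "case_nat a (\<lambda>i e. e i)"])
  then show ?thesis by simp
qed

lemma computable_shift:
  "computable n f \<Longrightarrow> computable (Suc n) (\<lambda>e. f (\<lambda>i. e (Suc i)))"
  using computable_compose[of n f "Suc n" "\<lambda>j e. e (Suc j)"] by (simp add: computable_arg)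

lemma computable_add [computable_intros]:
  "computable n a \<Longrightarrow> computable n b \<Longrightarrow> computable n (\<lambda>e. a e + b e)"
proof -
  assume "computable n a" "computable n b"
  then have "computable n (\<lambda>e. rec_nat (b e) (\<lambda>k y. Suc y) (a e))"
    by (intro computable_rec_nat computable_intros) auto
  moreover have "rec_nat y (\<lambda>k y. Suc y) x = x + y" for x y :: nat by (induct x) auto
  ultimately show ?thesis by simp
qed

lemma computable_diff [computable_intros]:
  "computable n a \<Longrightarrow> computable n b \<Longrightarrow> computable n (\<lambda>e. a e - b e)"
proof -
  have "computable m (\<lambda>e. rec_nat 0 (\<lambda>k y. k) (c e))" if "computable m c" for m c
    using that by (intro computable_rec_nat computable_intros) auto
  moreover have "rec_nat 0 (\<lambda>k y. k) x = x - 1" for x :: nat by (cases x) auto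
  ultimately have minus_one: "computable m c \<Longrightarrow> computable m (\<lambda>e. c e - 1)" for m c by simp
  assume "computable n a" "computable n b"
  then have "computable n (\<lambda>e. rec_nat (a e) (\<lambda>k y. y - 1) (b e))"
    by (intro computable_rec_nat minus_one computable_intros) auto
  moreover have "rec_nat x (\<lambda>k y. y - 1) y = x - y" for x y :: nat by (induct y) auto
  ultimately show ?thesis by simp
qed

lemma computable_mult [computable_intros]:
  "computable n a \<Longrightarrow> computable n b \<Longrightarrow> computable n (\<lambda>e. a e * b e)"
proof -
  assume a: "computable n a" and b: "computable n b"
  have "computable n (\<lambda>e. rec_nat 0 (\<lambda>k y. y + b e) (a e))"
    using a computable_shift[OF computable_shift[OF b]] by (intro computable_rec_nat computable_intros) auto
  moreover have "rec_nat 0 (\<lambda>k y. y + z) x = x * z" for x z :: nat by (induct x) auto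
  ultimately show ?thesis by simp
qed

lemma computable_power [computable_intros]:
  "computable n a \<Longrightarrow> computable n b \<Longrightarrow> computable n (\<lambda>e. a e ^ b e)"
proof -
  assume a: "computable n a" and b: "computable n b"
  have "computable n (\<lambda>e. rec_nat 1 (\<lambda>k y. y * a e) (b e))"
    using b computable_shift[OF computable_shift[OF a]] by (intro computable_rec_nat computable_intros) auto
  moreover have "rec_nat 1 (\<lambda>k y. y * z) x = z ^ x" for x z :: nat by (induct x) (auto simp: mult.commute)
  ultimately show ?thesis by simp
qed

lemma computable_funpow [computable_intros]:
  assumes "computable (Suc n) (\<lambda>e. F (e 0) (\<lambda>i. e (Suc i)))" "computable n a" "computable n x"
  shows "computable n (\<lambda>e. ((\<lambda>z. F z e) ^^ a e) (x e))"
proof -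
  have "computable n (\<lambda>e. rec_nat (x e) (\<lambda>k y. F y e) (a e))"
    using assms computable_shift[OF assms(1)] by (intro computable_rec_nat) auto
  moreover have "rec_nat z (\<lambda>k. f) m = (f ^^ m) z" for f and m z :: nat by (induct m) auto
  ultimately show ?thesis by simp
qed

lemma computable_sum_lessThan [computable_intros]:
  assumes F: "computable (Suc n) (\<lambda>e. F (e 0) (\<lambda>i. e (Suc i)))" and B: "computable n B"
  shows "computable n (\<lambda>e. \<Sum>i<B e. F i e)"
proof -
  have "computable (Suc (Suc n)) (case_nat (\<lambda>e. e 0) (\<lambda>j e. e (Suc (Suc j))) j)" if "j < Suc n" for j
    using that by (cases j) (auto intro: computable_arg)
  then have "computable (Suc (Suc n)) (\<lambda>e. F (e 0) (\<lambda>i. e (Suc (Suc i))))"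
    by (drule_tac computable_compose[OF F]) simp
  then have "computable n (\<lambda>e. rec_nat 0 (\<lambda>k y. y + F k e) (B e))"
    using B by (intro computable_rec_nat computable_intros) auto
  moreover have "rec_nat 0 (\<lambda>k y. y + F k e) m = (\<Sum>i<m. F i e)" for e m by (induct m) auto
  ultimately show ?thesis by simp
qed

lemma computable_pred_eq [computable_intros]:
  "computable n a \<Longrightarrow> computable n b \<Longrightarrow> computable_pred n (\<lambda>e. a e = b e)"
  unfolding computable_pred_def
  by (rule computable_cong[of n "\<lambda>e. 1 - ((a e - b e) + (b e - a e))"]) (intro computable_intros, auto)

lemma computable_pred_le [computable_intros]:
  "computable n a \<Longrightarrow> computable n b \<Longrightarrow> computable_pred n (\<lambda>e. a e \<le> b e)"
  unfolding computable_pred_def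
  by (rule computable_cong[of n "\<lambda>e. 1 - (a e - b e)"]) (intro computable_intros, auto)

lemma computable_pred_const [computable_intros]: "computable_pred n (\<lambda>e. P)"
  unfolding computable_pred_def by (cases P) (simp_all add: computable_const)

lemma computable_pred_not [computable_intros]:
  "computable_pred n P \<Longrightarrow> computable_pred n (\<lambda>e. \<not> P e)"
  unfolding computable_pred_def
  by (rule computable_cong[of n "\<lambda>e. 1 - (if P e then 1 else 0)"]) (intro computable_intros, auto)

lemma computable_pred_conj [computable_intros]:
  "computable_pred n P \<Longrightarrow> computable_pred n Q \<Longrightarrow> computable_pred n (\<lambda>e. P e \<and> Q e)"
  unfolding computable_pred_def
  by (rule computable_cong[of n "\<lambda>e. (if P e then 1 else 0) * (if Q e then 1 else 0)"])
    (intro computable_intros, auto)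

lemma computable_pred_disj [computable_intros]:
  "computable_pred n P \<Longrightarrow> computable_pred n Q \<Longrightarrow> computable_pred n (\<lambda>e. P e \<or> Q e)"
  by (rule computable_pred_cong[of n "\<lambda>e. \<not> (\<not> P e \<and> \<not> Q e)"]) (intro computable_intros, auto)

lemma computable_pred_imp [computable_intros]:
  "computable_pred n P \<Longrightarrow> computable_pred n Q \<Longrightarrow> computable_pred n (\<lambda>e. P e \<longrightarrow> Q e)"
  by (rule computable_pred_cong[of n "\<lambda>e. \<not> P e \<or> Q e"]) (intro computable_intros, auto)

lemma computable_If [computable_intros]:
  "computable_pred n P \<Longrightarrow> computable n a \<Longrightarrow> computable n b \<Longrightarrow>
   computable n (\<lambda>e. if P e then a e else b e)"
  unfolding computable_pred_def
  by (rule computable_cong[of n "\<lambda>e. (if P e then 1 else 0) * a e + (1 - (if P e then 1 else 0)) * b e"])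
    (intro computable_intros, auto)

lemma computable_min [computable_intros]:
  "computable n a \<Longrightarrow> computable n b \<Longrightarrow> computable n (\<lambda>e. min (a e) (b e))"
  unfolding min_def by (intro computable_intros)

lemma computable_max [computable_intros]:
  "computable n a \<Longrightarrow> computable n b \<Longrightarrow> computable n (\<lambda>e. max (a e) (b e))"
  unfolding max_def by (intro computable_intros)

lemma computable_pred_ball_lessThan [computable_intros]:
  assumes "computable_pred (Suc n) (\<lambda>e. P (e 0) (\<lambda>i. e (Suc i)))" "computable n B"
  shows "computable_pred n (\<lambda>e. \<forall>i<B e. P i e)"
proof -
  have "computable (Suc n) (\<lambda>e. 1 - (if P (e 0) (\<lambda>i. e (Suc i)) then 1 else 0))"
    using assms(1) by (intro computable_intros)
  then have "computable n (\<lambda>e. \<Sum>i<B e. 1 - (if P i e then 1 else 0))"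
    using assms(2) by (rule computable_sum_lessThan)
  then have "computable_pred n (\<lambda>e. (\<Sum>i<B e. 1 - (if P i e then 1 else 0)) = (0::nat))"
    by (rule computable_pred_eq[OF _ computable_const])
  then show ?thesis by (rule computable_pred_cong) (auto split: if_splits)
qed

lemma computable_pred_bex_lessThan [computable_intros]:
  assumes "computable_pred (Suc n) (\<lambda>e. P (e 0) (\<lambda>i. e (Suc i)))" "computable n B"
  shows "computable_pred n (\<lambda>e. \<exists>i<B e. P i e)"
proof -
  have "computable_pred n (\<lambda>e. \<not> (\<forall>i<B e. \<not> P i e))"
    using assms by (intro computable_intros)
  then show ?thesis by simp
qed

lemma computable_pred_in_finite [computable_intros]:
  assumes "finite S" "computable n a"
  shows "computable_pred n (\<lambda>e. a e \<in> S)"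
  using assms(1)
proof (induction S rule: finite_induct)
  case empty
  show ?case using computable_pred_const[of n False] by simp
next
  case (insert x F)
  have "computable_pred n (\<lambda>e. a e = x \<or> a e \<in> F)" by (intro computable_intros insert.IH assms(2))
  then show ?case by simp
qed

section \<open>Computability of the list and automaton codes\<close>

lemma prod_decode_le: "fst (prod_decode m) \<le> m" "snd (prod_decode m) \<le> m"
  using le_prod_encode_1[of "fst (prod_decode m)" "snd (prod_decode m)"]
    le_prod_encode_2[of "snd (prod_decode m)" "fst (prod_decode m)"] by simp_all

lemma sum_prod_encode_eq:
  "(\<Sum>x<Suc m. \<Sum>y<Suc m. if prod_encode (x, y) = m then f x y else 0) =
   f (fst (prod_decode m)) (snd (prod_decode m))" (is "?lhs = f ?a ?b")
proof -
  have "prod_encode (x, y) = m \<longleftrightarrow> x = ?a \<and> y = ?b" for x y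
    by (metis prod.collapse prod_decode_inverse prod_encode_inverse prod.inject)
  then have "?lhs = (\<Sum>x<Suc m. if x = ?a then \<Sum>y<Suc m. if y = ?b then f x y else 0 else 0)"
    by (intro sum.cong) auto
  also have "\<dots> = f ?a ?b"
    using prod_decode_le[of m] by (simp add: sum.delta del: lessThan_Suc)
  finally show ?thesis .
qed

lemma computable_prod_encode [computable_intros]:
  "computable n a \<Longrightarrow> computable n b \<Longrightarrow> computable n (\<lambda>e. prod_encode (a e, b e))"
proof -
  have "triangle k = (\<Sum>i<Suc k. i)" for k by (induct k) auto
  then have "prod_encode (x, y) = (\<Sum>i<Suc (x + y). i) + x" for x y by (simp add: prod_encode_def)
  moreover assume "computable n a" "computable n b"
  then have "computable n (\<lambda>e. (\<Sum>i<Suc (a e + b e). i) + a e)" by (intro computable_intros; simp)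
  ultimately show ?thesis by simp
qed

lemma computable_prod_decode [computable_intros]:
  assumes "computable n a"
  shows "computable n (\<lambda>e. fst (prod_decode (a e)))" "computable n (\<lambda>e. snd (prod_decode (a e)))"
proof -
  have "computable n (\<lambda>e. \<Sum>x<Suc (a e). \<Sum>y<Suc (a e). if prod_encode (x, y) = a e then x else 0)"
    "computable n (\<lambda>e. \<Sum>x<Suc (a e). \<Sum>y<Suc (a e). if prod_encode (x, y) = a e then y else 0)"
    using assms by (intro computable_intros computable_shift; simp)+
  then show "computable n (\<lambda>e. fst (prod_decode (a e)))" "computable n (\<lambda>e. snd (prod_decode (a e)))"
    by (simp_all only: sum_prod_encode_eq)
qed

definition hd_code :: "nat \<Rightarrow> nat" where "hd_code m = fst (prod_decode (m - 1))"
definition tl_code :: "nat \<Rightarrow> nat" where "tl_code m = snd (prod_decode (m - 1))"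
definition nth_code :: "nat \<Rightarrow> nat \<Rightarrow> nat" where "nth_code m j = hd_code ((tl_code ^^ j) m)"
definition length_code :: "nat \<Rightarrow> nat" where
  "length_code m = (\<Sum>j<m. if (tl_code ^^ j) m = 0 then 0 else 1)"
definition member_code :: "nat \<Rightarrow> nat \<Rightarrow> bool" where
  "member_code x m \<longleftrightarrow> (\<exists>j<length_code m. nth_code m j = x)"

lemma list_decode_eq_Nil_iff: "list_decode m = [] \<longleftrightarrow> m = 0"
  by (cases m) (auto split: prod.split)

lemma list_decode_neq_0: "m \<noteq> 0 \<Longrightarrow> list_decode m = hd_code m # list_decode (tl_code m)"
  by (cases m) (auto simp: hd_code_def tl_code_def split: prod.split)

lemma list_decode_tl_code: "list_decode (tl_code m) = tl (list_decode m)"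
  by (cases "m = 0") (simp_all add: list_decode_neq_0, simp add: tl_code_def prod_decode_def prod_decode_aux.simps)

lemma list_decode_funpow_tl_code: "list_decode ((tl_code ^^ j) m) = drop j (list_decode m)"
  by (induct j) (auto simp: list_decode_tl_code drop_Suc tl_drop)

lemma nth_code_eq: "j < length (list_decode m) \<Longrightarrow> nth_code m j = list_decode m ! j"
proof -
  assume j: "j < length (list_decode m)"
  then have "(tl_code ^^ j) m \<noteq> 0"
    by (metis list_decode_funpow_tl_code list_decode_eq_Nil_iff drop_eq_Nil not_le)
  from list_decode_neq_0[OF this] show ?thesis
    using j unfolding nth_code_def list_decode_funpow_tl_code by (metis hd_drop_conv_nth list.sel(1))
qed

lemma length_le_list_encode: "length xs \<le> list_encode xs"
  by (induct xs) (auto intro: le_trans[OF _ le_prod_encode_2])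

lemma member_le_list_encode: "x \<in> set xs \<Longrightarrow> x \<le> list_encode xs"
proof (induct xs)
  case (Cons y xs)
  then show ?case using le_prod_encode_1[of y "list_encode xs"] le_prod_encode_2[of "list_encode xs" y]
    by auto
qed simp

lemma length_code_eq: "length_code m = length (list_decode m)"
proof -
  have "(tl_code ^^ j) m = 0 \<longleftrightarrow> \<not> j < length (list_decode m)" for j
    by (metis list_decode_funpow_tl_code list_decode_eq_Nil_iff drop_eq_Nil not_le)
  then have "length_code m = card ({..<m} \<inter> {..<length (list_decode m)})"
    unfolding length_code_def by (simp add: sum.If_cases Int_def)
  also have "{..<m} \<inter> {..<length (list_decode m)} = {..<length (list_decode m)}"
    using length_le_list_encode[of "list_decode m"] by auto
  finally show ?thesis by simp
qed

lemma member_code_iff: "member_code x m \<longleftrightarrow> x \<in> set (list_decode m)"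
  unfolding member_code_def length_code_eq by (auto simp: nth_code_eq in_set_conv_nth)

lemma computable_tl_code [computable_intros]: "computable n a \<Longrightarrow> computable n (\<lambda>e. tl_code (a e))"
  unfolding tl_code_def by (intro computable_intros)

lemma computable_nth_code [computable_intros]:
  "computable n a \<Longrightarrow> computable n b \<Longrightarrow> computable n (\<lambda>e. nth_code (a e) (b e))"
  unfolding nth_code_def hd_code_def by (intro computable_intros computable_shift; simp)

lemma computable_length_code [computable_intros]:
  "computable n a \<Longrightarrow> computable n (\<lambda>e. length_code (a e))"
  unfolding length_code_def by (intro computable_intros computable_shift; simp)

lemma computable_pred_member_code [computable_intros]:
  "computable n a \<Longrightarrow> computable n b \<Longrightarrow> computable_pred n (\<lambda>e. member_code (a e) (b e))"
  unfolding member_code_def by (intro computable_intros computable_shift; simp)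

definition alph_code :: "nat \<Rightarrow> nat" where "alph_code c = fst (prod_decode c)"
definition init_code :: "nat \<Rightarrow> nat" where "init_code c = fst (prod_decode (snd (prod_decode c)))"
definition final_code :: "nat \<Rightarrow> nat" where
  "final_code c = fst (prod_decode (snd (prod_decode (snd (prod_decode c)))))"
definition tab_code :: "nat \<Rightarrow> nat" where
  "tab_code c = snd (prod_decode (snd (prod_decode (snd (prod_decode c)))))"

lemma dec_dsa_components:
  "alph (dec_dsa c) = list_decode (alph_code c)"
  "init (dec_dsa c) = init_code c"
  "final (dec_dsa c) = list_decode (final_code c)"
  "tab (dec_dsa c) = map dec_entry (list_decode (tab_code c))"
  by (simp_all add: dec_dsa_def alph_code_def init_code_def final_code_def tab_code_def split: prod.split)

definition entry_src :: "nat \<Rightarrow> nat" where "entry_src n = fst (prod_decode n)"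
definition entry_letter :: "nat \<Rightarrow> nat" where "entry_letter n = fst (prod_decode (snd (prod_decode n)))"
definition entry_tgt :: "nat \<Rightarrow> nat" where
  "entry_tgt n = fst (prod_decode (snd (prod_decode (snd (prod_decode n)))))"
definition entry_weight :: "nat \<Rightarrow> nat" where
  "entry_weight n = snd (prod_decode (snd (prod_decode (snd (prod_decode n)))))"

lemma dec_entry_eq: "dec_entry n = ((entry_src n, entry_letter n, entry_tgt n), entry_weight n)"
  by (simp add: dec_entry_def entry_src_def entry_letter_def entry_tgt_def entry_weight_def split: prod.split)

lemma map_of_eq_Some_iff_first:
  "map_of xs k = Some v \<longleftrightarrow> (\<exists>j<length xs. xs ! j = (k, v) \<and> (\<forall>j'<j. fst (xs ! j') \<noteq> k))"
  by (induct xs) (auto simp: Ex_less_Suc2 All_less_Suc2)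

definition lookup_code :: "nat \<Rightarrow> nat \<Rightarrow> nat \<Rightarrow> nat \<Rightarrow> nat \<Rightarrow> bool" where
  "lookup_code c p s q i \<longleftrightarrow> (\<exists>j<length_code (tab_code c).
     entry_src (nth_code (tab_code c) j) = p \<and> entry_letter (nth_code (tab_code c) j) = s \<and>
     entry_tgt (nth_code (tab_code c) j) = q \<and> entry_weight (nth_code (tab_code c) j) = i \<and>
     (\<forall>j'<j. \<not> (entry_src (nth_code (tab_code c) j') = p \<and> entry_letter (nth_code (tab_code c) j') = s \<and>
        entry_tgt (nth_code (tab_code c) j') = q)))"

lemma lookup_code_iff: "lookup_code c p s q i \<longleftrightarrow> map_of (tab (dec_dsa c)) (p, s, q) = Some i"
  unfolding map_of_eq_Some_iff_first lookup_code_def dec_dsa_components length_code_eq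
  by (simp add: nth_code_eq dec_entry_eq cong: conj_cong)

lemma computable_pred_lookup_code [computable_intros]:
  "computable n c \<Longrightarrow> computable n p \<Longrightarrow> computable n s \<Longrightarrow> computable n q \<Longrightarrow> computable n i \<Longrightarrow>
   computable_pred n (\<lambda>e. lookup_code (c e) (p e) (s e) (q e) (i e))"
  unfolding lookup_code_def entry_src_def entry_letter_def entry_tgt_def entry_weight_def tab_code_def
  by (intro computable_intros computable_shift; simp)

lemma computable_dsa_codes [computable_intros]:
  assumes "computable n a"
  shows "computable n (\<lambda>e. alph_code (a e))" "computable n (\<lambda>e. init_code (a e))"
    "computable n (\<lambda>e. final_code (a e))" "computable n (\<lambda>e. tab_code (a e))"
  unfolding alph_code_def init_code_def final_code_def tab_code_def by (intro computable_intros assms)+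

definition list_code_bound :: "nat \<Rightarrow> nat \<Rightarrow> nat" where
  "list_code_bound L M = list_encode (replicate L M)"

lemma prod_encode_mono: "a \<le> a' \<Longrightarrow> b \<le> b' \<Longrightarrow> prod_encode (a, b) \<le> prod_encode (a', b')"
proof -
  assume "a \<le> a'" "b \<le> b'"
  moreover have "triangle k \<le> triangle k'" if "k \<le> k'" for k k'
    using that unfolding triangle_def by (intro div_le_mono mult_le_mono) auto
  ultimately show ?thesis unfolding prod_encode_def by (simp add: add_mono)
qed

lemma list_encode_le_list_code_bound:
  "length xs \<le> L \<Longrightarrow> set xs \<subseteq> {..M} \<Longrightarrow> list_encode xs \<le> list_code_bound L M"
proof (induct xs arbitrary: L)
  case (Cons x xs)
  then obtain L' where L: "L = Suc L'" by (cases L) auto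
  with Cons have "prod_encode (x, list_encode xs) \<le> prod_encode (M, list_code_bound L' M)"
    by (intro prod_encode_mono) auto
  then show ?case unfolding L list_code_bound_def by simp
qed simp

lemma computable_list_code_bound [computable_intros]:
  "computable n a \<Longrightarrow> computable n b \<Longrightarrow> computable n (\<lambda>e. list_code_bound (a e) (b e))"
proof -
  have "list_code_bound L M = ((\<lambda>z. Suc (prod_encode (M, z))) ^^ L) 0" for L M
    unfolding list_code_bound_def by (induct L) auto
  moreover assume "computable n a" "computable n b"
  then have "computable n (\<lambda>e. ((\<lambda>z. Suc (prod_encode (b e, z))) ^^ a e) 0)"
    by (intro computable_intros computable_shift; simp)
  ultimately show ?thesis by simp
qed

section \<open>Two combinatorial principles on words\<close>

lemma koenig_infinite_branch:
  fixes P :: "'a list \<Rightarrow> bool"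
  assumes ex: "\<And>n. \<exists>xs. length xs = n \<and> P xs"
    and prefix_closed: "\<And>xs x. P (xs @ [x]) \<Longrightarrow> P xs"
    and bounded: "\<And>xs. P xs \<Longrightarrow> set xs \<subseteq> X" and fin: "finite X"
  shows "\<exists>f. \<forall>n. P (map f [0..<n])"
proof -
  have prefix: "P (xs @ ys) \<Longrightarrow> P xs" for xs ys
    by (induct ys rule: rev_induct) (auto intro: prefix_closed simp flip: append_assoc)
  define extendable where "extendable u \<longleftrightarrow> (\<forall>n. \<exists>v. length v = n \<and> P (u @ v))" for u
  have step: "\<exists>x. extendable (u @ [x])" if u: "extendable u" for u
  proof (rule ccontr)
    assume "\<not> (\<exists>x. extendable (u @ [x]))"
    then have "\<forall>x. \<exists>n. \<forall>v. length v = n \<longrightarrow> \<not> P (u @ [x] @ v)" unfolding extendable_def by auto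
    then obtain bound where bound: "\<And>x v. length v = bound x \<Longrightarrow> \<not> P (u @ [x] @ v)" by metis
    define n0 where "n0 = Max (bound ` X)"
    obtain v where v: "length v = Suc n0" "P (u @ v)" using u unfolding extendable_def by blast
    then obtain x v' where xv: "v = x # v'" "length v' = n0" by (cases v) auto
    have "x \<in> X" using bounded[OF v(2)] xv by auto
    then have "bound x \<le> n0" unfolding n0_def using fin by simp
    moreover have "P (u @ [x] @ take (bound x) v')"
      using v(2) xv prefix[of "u @ [x] @ take (bound x) v'" "drop (bound x) v'"] by simp
    ultimately show False using bound[of "take (bound x) v'" x] xv by simp
  qed
  have "\<exists>u'. (extendable u' \<and> length u' = Suc n) \<and> (\<exists>x. u' = u @ [x])"
    if "extendable u \<and> length u = n" for u n
    using that step by fastforce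
  moreover have "extendable []" using ex unfolding extendable_def by simp
  ultimately obtain U where U: "\<And>n. extendable (U n) \<and> length (U n) = n" "\<And>n. \<exists>x. U (Suc n) = U n @ [x]"
    using dependent_nat_choice[of "\<lambda>n u. extendable u \<and> length u = n" "\<lambda>n u u'. \<exists>x. u' = u @ [x]"]
    by (metis length_0_conv)
  have "map (\<lambda>i. U (Suc i) ! i) [0..<n] = U n" for n
  proof (induct n)
    case (Suc n)
    then show ?case using U[of n] by (auto simp: nth_append)
  qed (use U(1)[of 0] in simp)
  moreover have "P (U n)" for n
    using U(1)[of n] unfolding extendable_def by (metis append_Nil2 length_0_conv)
  ultimately show ?thesis by (intro exI[of _ "\<lambda>i. U (Suc i) ! i"]) simp
qed

lemma short_witness_of_right_invariant:
  fixes h :: "'a list \<Rightarrow> 'c"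
  assumes right_invariant: "\<And>u u' v. h u = h u' \<Longrightarrow> h (u @ v) = h (u' @ v)"
    and range: "\<And>w. set w \<subseteq> S \<Longrightarrow> h w \<in> X" and fin: "finite X"
    and w: "set w \<subseteq> S" "P (h w)"
  shows "\<exists>w'. set w' \<subseteq> S \<and> length w' < card X \<and> P (h w')"
  using w
proof (induction "length w" arbitrary: w rule: less_induct)
  case less
  show ?case
  proof (cases "length w < card X")
    case False
    have "h (take i w) \<in> X" for i
      using less.prems(1) by (intro range) (meson order_trans set_take_subset)
    then have "\<not> inj_on (\<lambda>i. h (take i w)) {..length w}"
      using card_inj_on_le[OF _ _ fin, of "\<lambda>i. h (take i w)" "{..length w}"] False by fastforce
    then obtain a b where ab: "a < b" "b \<le> length w" "h (take a w) = h (take b w)"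
      unfolding inj_on_def by (metis atMost_iff linorder_neqE_nat)
    define w' where "w' = take a w @ drop b w"
    have "h w' = h (take b w @ drop b w)" unfolding w'_def by (rule right_invariant) (use ab in simp)
    moreover have "length w' < length w" "set w' \<subseteq> S"
      unfolding w'_def using ab less.prems(1) by (auto dest: in_set_takeD in_set_dropD)
    ultimately show ?thesis using less.hyps less.prems(2) by simp
  qed (use less.prems in blast)
qed

section \<open>Discounted sums\<close>

definition weight_bound :: "real list \<Rightarrow> real" where
  "weight_bound as = sum_list (map abs as)"

lemma weight_bound_nonneg: "0 \<le> weight_bound as"
  unfolding weight_bound_def by (induct as) auto

lemma abs_le_weight_bound: "a \<in> set as \<Longrightarrow> \<bar>a\<bar> \<le> weight_bound as"
  using weight_bound_nonneg unfolding weight_bound_def by (induct as) (auto simp: add_increasing2)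

locale discount_factor =
  fixes lam :: real
  assumes lam_pos: "0 < lam" and lam_less_1: "lam < 1"
begin

definition dsum :: "(nat \<Rightarrow> real) \<Rightarrow> real" where
  "dsum s = (\<Sum>i. s i * lam ^ i)"

lemma summable_dsum: "(\<And>i. \<bar>s i\<bar> \<le> B) \<Longrightarrow> summable (\<lambda>i. s i * lam ^ i)"
  by (rule summable_comparison_test[where g = "\<lambda>i. B * lam ^ i"])
    (use lam_pos lam_less_1 in \<open>auto simp: abs_mult intro!: mult_right_mono summable_mult summable_geometric\<close>)

lemma abs_dsum_le:
  assumes "\<And>i. \<bar>s i\<bar> \<le> B"
  shows "\<bar>dsum s\<bar> \<le> B / (1 - lam)"
proof -
  have geo: "(\<lambda>i. B * lam ^ i) sums (B * (1 / (1 - lam)))"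
    using lam_pos lam_less_1 by (intro sums_mult geometric_sums) auto
  have abs_eq: "\<bar>s i * lam ^ i\<bar> = \<bar>s i\<bar> * lam ^ i" for i using lam_pos by (simp add: abs_mult)
  have summable: "summable (\<lambda>i. \<bar>s i * lam ^ i\<bar>)"
    unfolding abs_eq using assms by (intro summable_dsum) auto
  have "\<bar>dsum s\<bar> \<le> (\<Sum>i. \<bar>s i * lam ^ i\<bar>)"
    unfolding dsum_def using summable_norm[of "\<lambda>i. s i * lam ^ i"] summable by simp
  also have "\<dots> \<le> (\<Sum>i. B * lam ^ i)"
    unfolding abs_eq using assms lam_pos lam_less_1 summable geo
    by (intro suminf_le) (auto simp: abs_eq sums_summable intro!: mult_right_mono)
  finally show ?thesis using geo by (simp add: sums_iff)
qed

lemma dsum_split: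
  assumes "\<And>i. \<bar>s i\<bar> \<le> B"
  shows "dsum s = (\<Sum>i<n. s i * lam ^ i) + lam ^ n * dsum (\<lambda>i. s (i + n))"
proof -
  have "dsum s = (\<Sum>i. s (i + n) * lam ^ (i + n)) + (\<Sum>i<n. s i * lam ^ i)"
    unfolding dsum_def by (rule suminf_split_initial_segment[OF summable_dsum[OF assms]])
  also have "(\<Sum>i. s (i + n) * lam ^ (i + n)) = lam ^ n * dsum (\<lambda>i. s (i + n))"
    unfolding dsum_def power_add using summable_dsum[of "\<lambda>i. s (i + n)" B] assms
    by (simp add: suminf_mult[symmetric] mult_ac)
  finally show ?thesis by simp
qed

lemma dsum_const: "dsum (\<lambda>i. a) = a / (1 - lam)"
proof -
  have "(\<lambda>i. a * lam ^ i) sums (a * (1 / (1 - lam)))"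
    using lam_pos lam_less_1 by (intro sums_mult geometric_sums) auto
  then show ?thesis unfolding dsum_def by (simp add: sums_iff)
qed

lemma dsum_diff_le:
  assumes "\<And>i. \<bar>s i\<bar> \<le> B" "\<And>i. \<bar>s' i\<bar> \<le> B" "\<And>i. i < n \<Longrightarrow> s i = s' i"
  shows "\<bar>dsum s - dsum s'\<bar> \<le> 2 * B * lam ^ n / (1 - lam)"
proof -
  have bound: "\<bar>s i - s' i\<bar> \<le> 2 * B" for i using assms(1,2)[of i] by linarith
  have "dsum s - dsum s' = dsum (\<lambda>i. s i - s' i)"
    unfolding dsum_def using summable_dsum[OF assms(1)] summable_dsum[OF assms(2)]
    by (simp add: suminf_diff left_diff_distrib)
  also have "\<dots> = lam ^ n * dsum (\<lambda>i. s (i + n) - s' (i + n))"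
    using dsum_split[of "\<lambda>i. s i - s' i" "2 * B" n] bound assms(3) by simp
  finally have "\<bar>dsum s - dsum s'\<bar> = lam ^ n * \<bar>dsum (\<lambda>i. s (i + n) - s' (i + n))\<bar>"
    using lam_pos by (simp add: abs_mult)
  also have "\<dots> \<le> lam ^ n * (2 * B / (1 - lam))"
    using lam_pos bound by (intro mult_left_mono abs_dsum_le) auto
  finally show ?thesis by (simp add: mult_ac)
qed

lemma eq_0_if_abs_le_geometric:
  assumes "\<And>n. \<bar>x\<bar> \<le> K * lam ^ n"
  shows "x = 0"
proof -
  have "(\<lambda>n. K * lam ^ n) \<longlonglongrightarrow> K * 0"
    using lam_pos lam_less_1 by (intro tendsto_mult tendsto_const LIMSEQ_power_zero) auto
  then have "\<bar>x\<bar> \<le> 0" using assms by (intro LIMSEQ_le_const[of "\<lambda>n. K * lam ^ n"]) auto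
  then show ?thesis by simp
qed

lemma ex_power_less:
  assumes "0 < eps"
  shows "\<exists>N\<ge>1. K * lam ^ N < eps"
proof -
  have "(\<lambda>n. K * lam ^ n) \<longlonglongrightarrow> K * 0"
    using lam_pos lam_less_1 by (intro tendsto_mult tendsto_const LIMSEQ_power_zero) auto
  then obtain N0 where "\<And>n. n \<ge> N0 \<Longrightarrow> K * lam ^ n < eps"
    using order_tendstoD(2)[of _ 0 sequentially eps] assms by (auto simp: eventually_sequentially)
  then show ?thesis by (intro exI[of _ "Suc N0"]) (simp del: power_Suc)
qed

lemma dsum_eq_if_approximable:
  assumes f: "\<And>i. f i \<in> set as"
    and approx: "\<And>n. \<exists>s. (\<forall>i. s i \<in> set as) \<and> (\<forall>i<n. s i = f i) \<and> \<bar>dsum s - t\<bar> < lam ^ n"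
  shows "dsum f = t"
proof -
  have "\<bar>dsum f - t\<bar> \<le> (2 * weight_bound as / (1 - lam) + 1) * lam ^ n" for n
  proof -
    obtain s where s: "\<forall>i. s i \<in> set as" "\<forall>i<n. s i = f i" "\<bar>dsum s - t\<bar> < lam ^ n"
      using approx by blast
    have "\<bar>dsum f - dsum s\<bar> \<le> 2 * weight_bound as * lam ^ n / (1 - lam)"
      using s(1,2) f abs_le_weight_bound by (intro dsum_diff_le) auto
    then show ?thesis using s(3) by (simp add: field_simps)
  qed
  then have "dsum f - t = 0" by (rule eq_0_if_abs_le_geometric)
  then show ?thesis by simp
qed

text \<open>Koenig's lemma: the prefixes of weight sequences whose sum lies within lam ^ n of t,
  n the length of the prefix, form a finitely branching infinite tree, and the sum along an
  infinite branch is t.\<close>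

lemma gtds_gap:
  assumes no_solution: "\<not> (\<exists>w. gtds_solution lam t as w)"
  shows "\<exists>eps>0. \<forall>s. (\<forall>i. s i \<in> set as) \<longrightarrow> eps \<le> \<bar>dsum s - t\<bar>"
proof (rule ccontr)
  assume "\<not> (\<exists>eps>0. \<forall>s. (\<forall>i. s i \<in> set as) \<longrightarrow> eps \<le> \<bar>dsum s - t\<bar>)"
  then have close: "\<exists>s. (\<forall>i. s i \<in> set as) \<and> \<bar>dsum s - t\<bar> < eps" if "eps > 0" for eps
    using that by (auto simp: not_le)
  define P where "P u \<longleftrightarrow> (\<exists>s. (\<forall>i. s i \<in> set as) \<and> u = map s [0..<length u] \<and>
      \<bar>dsum s - t\<bar> < lam ^ length u)" for u
  have "\<exists>u. length u = n \<and> P u" for n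
    using close[of "lam ^ n"] lam_pos unfolding P_def by (metis length_map diff_zero length_upt zero_less_power)
  moreover have "P u" if "P (u @ [x])" for u x
  proof -
    from that obtain s where s: "\<forall>i. s i \<in> set as" "u @ [x] = map s [0..<Suc (length u)]"
        "\<bar>dsum s - t\<bar> < lam ^ Suc (length u)"
      unfolding P_def by auto
    have "lam ^ Suc (length u) \<le> lam ^ length u"
      using lam_pos lam_less_1 by (intro power_decreasing) auto
    then show ?thesis using s unfolding P_def by (intro exI[of _ s]) auto
  qed
  moreover have "set u \<subseteq> set as" if u: "P u" for u
  proof -
    obtain s where "\<forall>i. s i \<in> set as" "u = map s [0..<length u]" using u unfolding P_def by blast
    then show ?thesis by (metis image_subsetI set_map)
  qed
  ultimately obtain f where f: "\<And>n. P (map f [0..<n])"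
    using koenig_infinite_branch[of P "set as"] by blast
  have f_in: "f i \<in> set as" for i
    using f[of "Suc i"] unfolding P_def by (auto simp del: upt_Suc)
  have "\<exists>s. (\<forall>i. s i \<in> set as) \<and> (\<forall>i<n. s i = f i) \<and> \<bar>dsum s - t\<bar> < lam ^ n" for n
    using f[of n] unfolding P_def by (auto simp: map_eq_conv)
  with f_in have "dsum f = t" by (rule dsum_eq_if_approximable)
  then have "gtds_solution lam t as f"
    unfolding gtds_solution_def dsum_def
    using f_in summable_dsum[of f "weight_bound as"] abs_le_weight_bound by (auto dest: summable_sums)
  with no_solution show False by blast
qed

end

section \<open>Runs as lists and their weight-index prefixes\<close>

definition states_bounded :: "dsa \<Rightarrow> nat \<Rightarrow> bool" where
  "states_bounded A M \<longleftrightarrow> init A \<le> M \<and> (\<forall>p s q i. map_of (tab A) (p, s, q) = Some i \<longrightarrow> q \<le> M)"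

lemma ex_states_bounded: "\<exists>M. states_bounded A M"
proof -
  define M where "M = Max (insert (init A) ((\<lambda>((p, s, q), i). q) ` set (tab A)))"
  have "q \<le> M" if "map_of (tab A) (p, s, q) = Some i" for p s q i
    using map_of_SomeD[OF that] unfolding M_def by (force intro: Max_ge)
  moreover have "init A \<le> M" unfolding M_def by simp
  ultimately show ?thesis unfolding states_bounded_def by blast
qed

text \<open>A run of A on a finite word w is abstracted to its target state together with the first N
  indices (into the weight list) of the weights it reads: this is all that matters for the
  comparison of its value with the threshold.\<close>

locale weight_prefix =
  fixes as :: "real list" and N :: nat
begin

definition list_run :: "dsa \<Rightarrow> nat list \<Rightarrow> nat list \<Rightarrow> bool" where
  "list_run A w \<rho> \<longleftrightarrow> length \<rho> = Suc (length w) \<and> \<rho> ! 0 = init A \<and>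
     (\<forall>j<length w. \<exists>i<length as. map_of (tab A) (\<rho> ! j, w ! j, \<rho> ! Suc j) = Some i)"

definition weight_indices :: "dsa \<Rightarrow> nat list \<Rightarrow> nat list \<Rightarrow> nat list" where
  "weight_indices A w \<rho> = map (\<lambda>j. the (map_of (tab A) (\<rho> ! j, w ! j, \<rho> ! Suc j))) [0..<length w]"

definition index_prefixes :: "nat list set" where
  "index_prefixes = {\<tau>. length \<tau> \<le> N \<and> set \<tau> \<subseteq> {..<length as}}"

definition good_word :: "bool \<Rightarrow> nat list set \<Rightarrow> dsa \<Rightarrow> nat list \<Rightarrow> bool" where
  "good_word acc G A w \<longleftrightarrow> (\<exists>\<rho>. list_run A w \<rho> \<and> (acc \<longrightarrow> \<rho> ! length w \<in> set (final A)) \<and>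
     take N (weight_indices A w \<rho>) \<in> G)"

definition configs :: "dsa \<Rightarrow> nat list \<Rightarrow> (nat \<times> nat list) set" where
  "configs A w = {(\<rho> ! length w, take N (weight_indices A w \<rho>)) | \<rho>. list_run A w \<rho>}"

lemma finite_index_prefixes: "finite index_prefixes"
  using finite_lists_length_le[of "{..<length as}" N] unfolding index_prefixes_def by (simp add: conj_commute)

lemma weight_indices_snoc:
  "length \<rho> = Suc (length u) \<Longrightarrow>
   weight_indices A (u @ [a]) (\<rho> @ [q]) = weight_indices A u \<rho> @ [the (map_of (tab A) (\<rho> ! length u, a, q))]"
  unfolding weight_indices_def by (auto simp: nth_append intro!: map_cong)

lemma weight_indices_run:
  assumes "list_run A w \<rho>"
  shows "length (weight_indices A w \<rho>) = length w" "set (weight_indices A w \<rho>) \<subseteq> {..<length as}"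
    "\<And>j. j < length w \<Longrightarrow> map_of (tab A) (\<rho> ! j, w ! j, \<rho> ! Suc j) = Some (weight_indices A w \<rho> ! j)"
  using assms unfolding weight_indices_def list_run_def by force+

lemma take_weight_indices_in_index_prefixes:
  "list_run A w \<rho> \<Longrightarrow> take N (weight_indices A w \<rho>) \<in> index_prefixes"
  using weight_indices_run(2)[of A w \<rho>] unfolding index_prefixes_def by (auto dest: in_set_takeD)

lemma list_run_snoc:
  "list_run A (u @ [a]) \<rho>' \<longleftrightarrow> (\<exists>\<rho> q i. \<rho>' = \<rho> @ [q] \<and> list_run A u \<rho> \<and> i < length as \<and>
      map_of (tab A) (\<rho> ! length u, a, q) = Some i)"
proof
  assume r: "list_run A (u @ [a]) \<rho>'"
  then obtain \<rho> q where \<rho>': "\<rho>' = \<rho> @ [q]" unfolding list_run_def by (metis rev_exhaust length_0_conv nat.distinct(1))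
  with r have "length \<rho> = Suc (length u)" unfolding list_run_def by simp
  with r \<rho>' show "\<exists>\<rho> q i. \<rho>' = \<rho> @ [q] \<and> list_run A u \<rho> \<and> i < length as \<and>
      map_of (tab A) (\<rho> ! length u, a, q) = Some i"
    unfolding list_run_def by (auto simp: nth_append All_less_Suc)
next
  assume "\<exists>\<rho> q i. \<rho>' = \<rho> @ [q] \<and> list_run A u \<rho> \<and> i < length as \<and>
      map_of (tab A) (\<rho> ! length u, a, q) = Some i"
  then show "list_run A (u @ [a]) \<rho>'"
    unfolding list_run_def by (auto simp: nth_append All_less_Suc less_Suc_eq)
qed

lemma configs_snoc:
  "configs A (u @ [a]) = {(q', take N (\<tau> @ [i])) | q \<tau> q' i. (q, \<tau>) \<in> configs A u \<and> i < length as \<and>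
      map_of (tab A) (q, a, q') = Some i}" (is "_ = ?step")
proof (intro set_eqI iffI)
  fix x assume "x \<in> configs A (u @ [a])"
  then obtain \<rho> q' i where x: "x = ((\<rho> @ [q']) ! length (u @ [a]), take N (weight_indices A (u @ [a]) (\<rho> @ [q'])))"
      and r: "list_run A u \<rho>" "i < length as" "map_of (tab A) (\<rho> ! length u, a, q') = Some i"
    unfolding configs_def list_run_snoc by blast
  then have len: "length \<rho> = Suc (length u)" unfolding list_run_def by simp
  then have "x = (q', take N (take N (weight_indices A u \<rho>) @ [i]))"
    using x r by (simp add: weight_indices_snoc nth_append take_append min_def)
  moreover have "(\<rho> ! length u, take N (weight_indices A u \<rho>)) \<in> configs A u"
    using r unfolding configs_def by blast
  ultimately show "x \<in> ?step" using r by blast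
next
  fix x assume "x \<in> ?step"
  then obtain \<rho> q' i where x: "x = (q', take N (take N (weight_indices A u \<rho>) @ [i]))"
      and r: "list_run A u \<rho>" "i < length as" "map_of (tab A) (\<rho> ! length u, a, q') = Some i"
    unfolding configs_def by blast
  then have len: "length \<rho> = Suc (length u)" unfolding list_run_def by simp
  have "list_run A (u @ [a]) (\<rho> @ [q'])" using r list_run_snoc by blast
  moreover have "x = ((\<rho> @ [q']) ! length (u @ [a]), take N (weight_indices A (u @ [a]) (\<rho> @ [q'])))"
    using x r len by (simp add: weight_indices_snoc nth_append take_append min_def)
  ultimately show "x \<in> configs A (u @ [a])" unfolding configs_def by blast
qed

lemma configs_append_cong: "configs A u = configs A u' \<Longrightarrow> configs A (u @ v) = configs A (u' @ v)"
proof (induct v arbitrary: u u')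
  case (Cons a v)
  then have "configs A (u @ [a]) = configs A (u' @ [a])" by (simp add: configs_snoc)
  then show ?case using Cons.hyps[of "u @ [a]" "u' @ [a]"] by simp
qed simp

lemma list_run_states_le: "list_run A w \<rho> \<Longrightarrow> states_bounded A M \<Longrightarrow> set \<rho> \<subseteq> {..M}"
proof
  fix x assume r: "list_run A w \<rho>" and M: "states_bounded A M" and "x \<in> set \<rho>"
  then obtain j where j: "j < length \<rho>" "x = \<rho> ! j" by (metis in_set_conv_nth)
  show "x \<in> {..M}"
  proof (cases j)
    case 0
    then show ?thesis using r M j unfolding list_run_def states_bounded_def by simp
  next
    case (Suc j')
    with r j obtain i where "map_of (tab A) (\<rho> ! j', w ! j', \<rho> ! Suc j') = Some i"
      unfolding list_run_def by auto
    then show ?thesis using M Suc j unfolding states_bounded_def by auto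
  qed
qed

lemma configs_subset: "states_bounded A M \<Longrightarrow> configs A w \<subseteq> {..M} \<times> index_prefixes"
proof
  fix x assume M: "states_bounded A M" and "x \<in> configs A w"
  then obtain \<rho> where x: "x = (\<rho> ! length w, take N (weight_indices A w \<rho>))" and r: "list_run A w \<rho>"
    unfolding configs_def by blast
  have "\<rho> ! length w \<in> set \<rho>" using r unfolding list_run_def by simp
  then show "x \<in> {..M} \<times> index_prefixes"
    using x list_run_states_le[OF r M] take_weight_indices_in_index_prefixes[OF r] by auto
qed

lemma good_word_iff_configs:
  "good_word acc G A w \<longleftrightarrow> (\<exists>(q, \<tau>)\<in>configs A w. (acc \<longrightarrow> q \<in> set (final A)) \<and> \<tau> \<in> G)"
  unfolding good_word_def configs_def by blast

text \<open>Pumping: the configuration set is a right-invariant function of the word with at most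
  2 ^ (Suc M * card index_prefixes) values, so a bad word can be shortened below that length.\<close>

lemma all_good_words_iff_short:
  assumes M: "states_bounded A M" and K: "2 ^ (Suc M * card index_prefixes) \<le> K"
  shows "(\<forall>w. set w \<subseteq> S \<longrightarrow> good_word acc G A w) \<longleftrightarrow>
    (\<forall>w. set w \<subseteq> S \<and> length w \<le> K \<longrightarrow> good_word acc G A w)"
proof (intro iffI allI impI)
  fix w assume short: "\<forall>w. set w \<subseteq> S \<and> length w \<le> K \<longrightarrow> good_word acc G A w" and w: "set w \<subseteq> S"
  let ?bad = "\<lambda>C. \<not> (\<exists>(q, \<tau>)\<in>C. (acc \<longrightarrow> q \<in> set (final A)) \<and> \<tau> \<in> G)"
  show "good_word acc G A w"
  proof (rule ccontr)
    assume "\<not> good_word acc G A w"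
    then have "?bad (configs A w)" by (simp add: good_word_iff_configs)
    then obtain w' where w': "set w' \<subseteq> S" "length w' < card (Pow ({..M} \<times> index_prefixes))"
        "?bad (configs A w')"
      using short_witness_of_right_invariant[of "configs A" S "Pow ({..M} \<times> index_prefixes)" w ?bad]
        configs_append_cong configs_subset[OF M] finite_index_prefixes w by blast
    moreover have "card (Pow ({..M} \<times> index_prefixes)) = 2 ^ (Suc M * card index_prefixes)"
      using finite_index_prefixes by (simp add: card_Pow card_cartesian_product)
    ultimately have "good_word acc G A w'" using short K by simp
    with w'(3) show False by (simp add: good_word_iff_configs)
  qed
qed auto

end

section \<open>Deciding the threshold comparison from a bounded prefix\<close>

lemma same_side_if_close:
  fixes x y t eps :: real
  assumes "\<bar>x - y\<bar> < eps" "eps \<le> \<bar>y - t\<bar>"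
  shows "(x < t \<longleftrightarrow> y < t) \<and> (x \<le> t \<longleftrightarrow> y < t)"
  using assms by linarith

text \<open>The factor 3 in N_large pays for comparing the value of a finite run with padded_value of
  its first N weights: one tail bound for the padding and two for changing the weights beyond
  position N.\<close>

locale gtds_approximation = discount_factor + weight_prefix +
  fixes t eps :: real
  assumes gap: "\<And>s. (\<forall>i. s i \<in> set as) \<Longrightarrow> eps \<le> \<bar>dsum s - t\<bar>"
    and N_pos: "1 \<le> N"
    and N_large: "3 * weight_bound as * lam ^ N / (1 - lam) < eps"
begin

lemma eps_pos: "0 < eps"
proof -
  have "0 \<le> 3 * weight_bound as * lam ^ N / (1 - lam)"
    using weight_bound_nonneg lam_pos lam_less_1 by simp
  with N_large show ?thesis by linarith
qed

definition prefix_value :: "nat list \<Rightarrow> real" where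
  "prefix_value \<tau> = (\<Sum>i<length \<tau>. lam ^ i * as ! (\<tau> ! i))"

definition padded_weights :: "nat list \<Rightarrow> nat \<Rightarrow> real" where
  "padded_weights \<tau> i = (if i < length \<tau> then as ! (\<tau> ! i) else hd as)"

definition padded_value :: "nat list \<Rightarrow> real" where
  "padded_value \<tau> = prefix_value \<tau> + lam ^ length \<tau> * hd as / (1 - lam)"

lemma padded_weights_in_weights: "as \<noteq> [] \<Longrightarrow> set \<tau> \<subseteq> {..<length as} \<Longrightarrow> padded_weights \<tau> i \<in> set as"
  unfolding padded_weights_def by (auto simp: hd_in_set) (meson lessThan_iff nth_mem subsetD)

lemma dsum_padded:
  assumes "as \<noteq> []" "set \<tau> \<subseteq> {..<length as}"
  shows "dsum (padded_weights \<tau>) = padded_value \<tau>"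
proof -
  have "dsum (padded_weights \<tau>) = (\<Sum>i<length \<tau>. padded_weights \<tau> i * lam ^ i) + lam ^ length \<tau> * dsum (\<lambda>i. hd as)"
    using dsum_split[of "padded_weights \<tau>" "weight_bound as" "length \<tau>"]
      padded_weights_in_weights[OF assms] abs_le_weight_bound by (simp add: padded_weights_def)
  then show ?thesis unfolding padded_value_def prefix_value_def dsum_const
    by (simp add: padded_weights_def mult.commute)
qed

lemma padded_value_far: "as \<noteq> [] \<Longrightarrow> set \<tau> \<subseteq> {..<length as} \<Longrightarrow> eps \<le> \<bar>padded_value \<tau> - t\<bar>"
  using gap[of "padded_weights \<tau>"] padded_weights_in_weights dsum_padded by auto

lemma padded_value_take_close:
  assumes ne: "as \<noteq> []" and valid: "set \<iota> \<subseteq> {..<length as}" and long: "N \<le> length \<iota>"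
  shows "\<bar>prefix_value \<iota> - padded_value (take N \<iota>)\<bar> < eps"
proof -
  define D where "D = weight_bound as * lam ^ N / (1 - lam)"
  have valid': "set (take N \<iota>) \<subseteq> {..<length as}" using valid by (meson order_trans set_take_subset)
  have "\<bar>dsum (padded_weights \<iota>) - dsum (padded_weights (take N \<iota>))\<bar> \<le> 2 * weight_bound as * lam ^ N / (1 - lam)"
    using padded_weights_in_weights[OF ne valid] padded_weights_in_weights[OF ne valid'] long
    by (intro dsum_diff_le abs_le_weight_bound) (auto simp: padded_weights_def)
  then have "\<bar>padded_value \<iota> - padded_value (take N \<iota>)\<bar> \<le> 2 * D"
    using dsum_padded[OF ne valid] dsum_padded[OF ne valid'] by (simp add: D_def)
  moreover have "\<bar>lam ^ length \<iota> * hd as / (1 - lam)\<bar> \<le> D"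
  proof -
    have "lam ^ length \<iota> * \<bar>hd as\<bar> \<le> lam ^ N * weight_bound as"
      using long lam_pos lam_less_1 weight_bound_nonneg abs_le_weight_bound[OF hd_in_set[OF ne]]
      by (intro mult_mono power_decreasing) auto
    then show ?thesis unfolding D_def using lam_pos lam_less_1
      by (simp add: abs_mult divide_right_mono mult.commute)
  qed
  moreover have "3 * D < eps" using N_large unfolding D_def by simp
  ultimately show ?thesis using padded_value_def[of \<iota>] by linarith
qed

lemma dsum_close_to_padded_value:
  assumes ne: "as \<noteq> []" and valid: "\<And>i. \<iota> i < length as"
  shows "\<bar>dsum (\<lambda>i. as ! \<iota> i) - padded_value (map \<iota> [0..<N])\<bar> < eps"
proof -
  have valid': "set (map \<iota> [0..<N]) \<subseteq> {..<length as}" using valid by auto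
  have "\<bar>dsum (\<lambda>i. as ! \<iota> i) - dsum (padded_weights (map \<iota> [0..<N]))\<bar> \<le> 2 * weight_bound as * lam ^ N / (1 - lam)"
    using valid padded_weights_in_weights[OF ne valid'] abs_le_weight_bound
    by (intro dsum_diff_le) (auto simp: padded_weights_def)
  moreover have "0 \<le> weight_bound as * lam ^ N / (1 - lam)"
    using weight_bound_nonneg lam_pos lam_less_1 by simp
  ultimately show ?thesis using N_large dsum_padded[OF ne valid'] by simp
qed

definition good_lt :: "nat list set" where
  "good_lt = {\<tau> \<in> index_prefixes. if length \<tau> < N then prefix_value \<tau> < t else padded_value \<tau> < t}"

definition good_le :: "nat list set" where
  "good_le = {\<tau> \<in> index_prefixes. if length \<tau> < N then prefix_value \<tau> \<le> t else padded_value \<tau> < t}"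

definition good_inf :: "nat list set" where
  "good_inf = {\<tau> \<in> index_prefixes. length \<tau> < N \<or> padded_value \<tau> < t}"

lemma weights_nonempty_if_list_run: "list_run A w \<rho> \<Longrightarrow> w \<noteq> [] \<Longrightarrow> as \<noteq> []"
  unfolding list_run_def by (cases w) auto

lemma prefix_value_threshold_iff:
  assumes r: "list_run A w \<rho>"
  shows "(prefix_value (weight_indices A w \<rho>) < t \<longleftrightarrow> take N (weight_indices A w \<rho>) \<in> good_lt) \<and>
         (prefix_value (weight_indices A w \<rho>) \<le> t \<longleftrightarrow> take N (weight_indices A w \<rho>) \<in> good_le)"
proof (cases "length w < N")
  case True
  then show ?thesis
    using take_weight_indices_in_index_prefixes[OF r] weight_indices_run(1)[OF r]
    unfolding good_lt_def good_le_def by auto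
next
  case False
  with N_pos have ne: "as \<noteq> []" using weights_nonempty_if_list_run[OF r] by (cases w) auto
  let ?\<iota> = "weight_indices A w \<rho>"
  have "set (take N ?\<iota>) \<subseteq> {..<length as}"
    using weight_indices_run(2)[OF r] by (meson order_trans set_take_subset)
  with ne have "eps \<le> \<bar>padded_value (take N ?\<iota>) - t\<bar>" by (rule padded_value_far)
  moreover have "\<bar>prefix_value ?\<iota> - padded_value (take N ?\<iota>)\<bar> < eps"
    using False weight_indices_run[OF r] by (intro padded_value_take_close ne) auto
  ultimately have "(prefix_value ?\<iota> < t \<longleftrightarrow> padded_value (take N ?\<iota>) < t) \<and>
      (prefix_value ?\<iota> \<le> t \<longleftrightarrow> padded_value (take N ?\<iota>) < t)"
    by (intro same_side_if_close)
  then show ?thesis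
    using False weight_indices_run(1)[OF r] take_weight_indices_in_index_prefixes[OF r]
    unfolding good_lt_def good_le_def by simp
qed

lemma delta_iff: "tr \<in> delta as A \<longleftrightarrow> (\<exists>i<length as. map_of (tab A) tr = Some i)"
  unfolding delta_def by auto

lemma ex_fin_accepting_iff_list_run:
  "(\<exists>\<rho>. fin_accepting as A w \<rho> \<and> P (fin_value lam as A w \<rho>)) \<longleftrightarrow>
   (\<exists>\<rho>. list_run A w \<rho> \<and> \<rho> ! length w \<in> set (final A) \<and> P (prefix_value (weight_indices A w \<rho>)))"
proof
  assume "\<exists>\<rho>. fin_accepting as A w \<rho> \<and> P (fin_value lam as A w \<rho>)"
  then obtain \<rho> where r: "fin_accepting as A w \<rho>" "P (fin_value lam as A w \<rho>)" by blast
  define \<rho>l where "\<rho>l = map \<rho> [0..<Suc (length w)]"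
  have nth: "j \<le> length w \<Longrightarrow> \<rho>l ! j = \<rho> j" for j
    unfolding \<rho>l_def by (simp add: nth_map_upt del: upt_Suc)
  have "list_run A w \<rho>l" "\<rho>l ! length w \<in> set (final A)"
    using r(1) nth unfolding list_run_def fin_accepting_def fin_run_def delta_iff
    by (auto simp: \<rho>l_def simp del: upt_Suc)
  moreover have "prefix_value (weight_indices A w \<rho>l) = fin_value lam as A w \<rho>"
    unfolding prefix_value_def weight_indices_def fin_value_def gamma_def using nth by (intro sum.cong) auto
  ultimately show "\<exists>\<rho>. list_run A w \<rho> \<and> \<rho> ! length w \<in> set (final A) \<and> P (prefix_value (weight_indices A w \<rho>))"
    using r(2) by metis
next
  assume "\<exists>\<rho>. list_run A w \<rho> \<and> \<rho> ! length w \<in> set (final A) \<and> P (prefix_value (weight_indices A w \<rho>))"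
  then obtain \<rho> where r: "list_run A w \<rho>" "\<rho> ! length w \<in> set (final A)"
      "P (prefix_value (weight_indices A w \<rho>))" by blast
  have "fin_accepting as A w (\<lambda>i. \<rho> ! i)"
    using r(1,2) unfolding fin_accepting_def fin_run_def delta_iff list_run_def by auto
  moreover have "prefix_value (weight_indices A w \<rho>) = fin_value lam as A w (\<lambda>i. \<rho> ! i)"
    unfolding prefix_value_def weight_indices_def fin_value_def gamma_def by (intro sum.cong) auto
  ultimately show "\<exists>\<rho>. fin_accepting as A w \<rho> \<and> P (fin_value lam as A w \<rho>)" using r(3) by metis
qed

lemma fin_lt_universal_iff:
  "fin_lt_universal lam as t A \<longleftrightarrow> (\<forall>w. set w \<subseteq> set (alph A) \<longrightarrow> good_word True good_lt A w)"
proof -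
  have "fin_aut_val lam as A w < ereal t \<longleftrightarrow> good_word True good_lt A w" for w
  proof -
    have "fin_aut_val lam as A w < ereal t \<longleftrightarrow>
        (\<exists>\<rho>. fin_accepting as A w \<rho> \<and> fin_value lam as A w \<rho> < t)"
      unfolding fin_aut_val_def Inf_less_iff by auto
    also have "\<dots> \<longleftrightarrow> (\<exists>\<rho>. list_run A w \<rho> \<and> \<rho> ! length w \<in> set (final A) \<and>
        prefix_value (weight_indices A w \<rho>) < t)"
      by (rule ex_fin_accepting_iff_list_run)
    also have "\<dots> \<longleftrightarrow> good_word True good_lt A w"
      unfolding good_word_def using prefix_value_threshold_iff by blast
    finally show ?thesis .
  qed
  then show ?thesis unfolding fin_lt_universal_def fin_words_def by auto
qed

lemma finite_fin_values: "finite {ereal (fin_value lam as A w \<rho>) | \<rho>. fin_accepting as A w \<rho>}"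
proof -
  have "{ereal (fin_value lam as A w \<rho>) | \<rho>. fin_accepting as A w \<rho>} \<subseteq>
      (\<lambda>\<tau>. ereal (prefix_value \<tau>)) ` {\<tau>. set \<tau> \<subseteq> {..<length as} \<and> length \<tau> = length w}"
  proof
    fix x assume "x \<in> {ereal (fin_value lam as A w \<rho>) | \<rho>. fin_accepting as A w \<rho>}"
    then obtain \<rho> where "list_run A w \<rho>" "x = ereal (prefix_value (weight_indices A w \<rho>))"
      using ex_fin_accepting_iff_list_run[of A w "\<lambda>v. x = ereal v"] by blast
    then show "x \<in> (\<lambda>\<tau>. ereal (prefix_value \<tau>)) ` {\<tau>. set \<tau> \<subseteq> {..<length as} \<and> length \<tau> = length w}"
      using weight_indices_run(1,2) by blast
  qed
  moreover have "finite {\<tau>. set \<tau> \<subseteq> {..<length as} \<and> length \<tau> = length w}"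
    by (rule finite_lists_length_eq) simp
  ultimately show ?thesis using finite_subset by blast
qed

lemma fin_aut_val_le_iff:
  "fin_aut_val lam as A w \<le> ereal t \<longleftrightarrow> (\<exists>\<rho>. fin_accepting as A w \<rho> \<and> fin_value lam as A w \<rho> \<le> t)"
proof
  let ?S = "{ereal (fin_value lam as A w \<rho>) | \<rho>. fin_accepting as A w \<rho>}"
  assume le: "fin_aut_val lam as A w \<le> ereal t"
  have "?S \<noteq> {}"
  proof
    assume "?S = {}"
    then have "fin_aut_val lam as A w = top" unfolding fin_aut_val_def by (simp only: Inf_empty)
    with le show False by (simp add: top_ereal_def)
  qed
  with finite_fin_values have "Min ?S \<in> ?S" "Min ?S = Inf ?S" by (rule Min_in, rule Min_Inf)
  then have "Inf ?S \<in> ?S" by (simp only:)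
  then obtain \<rho> where "fin_accepting as A w \<rho>" "Inf ?S = ereal (fin_value lam as A w \<rho>)" by blast
  with le show "\<exists>\<rho>. fin_accepting as A w \<rho> \<and> fin_value lam as A w \<rho> \<le> t"
    unfolding fin_aut_val_def by (intro exI[of _ \<rho>]) simp
next
  assume "\<exists>\<rho>. fin_accepting as A w \<rho> \<and> fin_value lam as A w \<rho> \<le> t"
  then obtain \<rho> where "fin_accepting as A w \<rho>" and le: "fin_value lam as A w \<rho> \<le> t" by blast
  then have "fin_aut_val lam as A w \<le> ereal (fin_value lam as A w \<rho>)"
    unfolding fin_aut_val_def by (intro Inf_lower) blast
  also have "\<dots> \<le> ereal t" using le by simp
  finally show "fin_aut_val lam as A w \<le> ereal t" .
qed

lemma fin_le_universal_iff:
  "fin_le_universal lam as t A \<longleftrightarrow> (\<forall>w. set w \<subseteq> set (alph A) \<longrightarrow> good_word True good_le A w)"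
proof -
  have "fin_aut_val lam as A w \<le> ereal t \<longleftrightarrow> good_word True good_le A w" for w
    unfolding fin_aut_val_le_iff ex_fin_accepting_iff_list_run[where P = "\<lambda>v. v \<le> t"] good_word_def
    using prefix_value_threshold_iff by blast
  then show ?thesis unfolding fin_le_universal_def fin_words_def by auto
qed

definition inf_run_indices :: "dsa \<Rightarrow> (nat \<Rightarrow> nat) \<Rightarrow> (nat \<Rightarrow> nat) \<Rightarrow> nat \<Rightarrow> nat" where
  "inf_run_indices A w \<rho> i = the (map_of (tab A) (\<rho> i, w i, \<rho> (Suc i)))"

lemma inf_run_indices:
  "inf_run as A w \<rho> \<Longrightarrow> inf_run_indices A w \<rho> i < length as \<and>
     map_of (tab A) (\<rho> i, w i, \<rho> (Suc i)) = Some (inf_run_indices A w \<rho> i)"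
proof -
  assume "inf_run as A w \<rho>"
  then obtain j where "j < length as" "map_of (tab A) (\<rho> i, w i, \<rho> (Suc i)) = Some j"
    unfolding inf_run_def delta_iff by blast
  then show ?thesis unfolding inf_run_indices_def by simp
qed

lemma inf_value_eq_dsum: "inf_value lam as A w \<rho> = dsum (\<lambda>i. as ! inf_run_indices A w \<rho> i)"
  unfolding inf_value_def dsum_def gamma_def inf_run_indices_def by (simp add: mult.commute)

lemma inf_value_threshold_iff:
  assumes r: "inf_run as A w \<rho>"
  shows "eps \<le> \<bar>inf_value lam as A w \<rho> - t\<bar> \<and>
    (inf_value lam as A w \<rho> < t \<longleftrightarrow> padded_value (map (inf_run_indices A w \<rho>) [0..<N]) < t)"
proof -
  have valid: "\<And>i. inf_run_indices A w \<rho> i < length as" using inf_run_indices[OF r] by blast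
  then have ne: "as \<noteq> []" by (metis less_nat_zero_code list.size(3))
  have "eps \<le> \<bar>inf_value lam as A w \<rho> - t\<bar>"
    unfolding inf_value_eq_dsum using valid by (intro gap) simp
  moreover have "eps \<le> \<bar>padded_value (map (inf_run_indices A w \<rho>) [0..<N]) - t\<bar>"
    using valid by (intro padded_value_far ne) auto
  moreover note same_side_if_close[OF dsum_close_to_padded_value[OF ne valid] this]
  ultimately show ?thesis unfolding inf_value_eq_dsum by simp
qed

lemma inf_aut_val_less_iff:
  "inf_aut_val lam as A w < ereal t \<longleftrightarrow>
     (\<exists>\<rho>. inf_run as A w \<rho> \<and> padded_value (map (inf_run_indices A w \<rho>) [0..<N]) < t)"
proof -
  have "inf_aut_val lam as A w < ereal t \<longleftrightarrow> (\<exists>\<rho>. inf_run as A w \<rho> \<and> inf_value lam as A w \<rho> < t)"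
    unfolding inf_aut_val_def Inf_less_iff by auto
  also have "\<dots> \<longleftrightarrow> (\<exists>\<rho>. inf_run as A w \<rho> \<and> padded_value (map (inf_run_indices A w \<rho>) [0..<N]) < t)"
    using inf_value_threshold_iff by (intro ex_cong1) blast
  finally show ?thesis .
qed

text \<open>Since every run value stays eps away from t, the infimum cannot equal t without
  being below it.\<close>

lemma inf_aut_val_le_iff:
  "inf_aut_val lam as A w \<le> ereal t \<longleftrightarrow> inf_aut_val lam as A w < ereal t"
proof
  assume le: "inf_aut_val lam as A w \<le> ereal t"
  show "inf_aut_val lam as A w < ereal t"
  proof (rule ccontr)
    assume not_less: "\<not> inf_aut_val lam as A w < ereal t"
    have "ereal (t + eps) \<le> ereal (inf_value lam as A w \<rho>)" if r: "inf_run as A w \<rho>" for \<rho>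
    proof -
      have "inf_aut_val lam as A w \<le> ereal (inf_value lam as A w \<rho>)"
        unfolding inf_aut_val_def using r by (intro Inf_lower) blast
      with not_less have "\<not> inf_value lam as A w \<rho> < t"
        using le_less_trans[of _ "ereal (inf_value lam as A w \<rho>)" "ereal t"] by auto
      moreover have "eps \<le> \<bar>inf_value lam as A w \<rho> - t\<bar>" using inf_value_threshold_iff[OF r] by blast
      ultimately have "t + eps \<le> inf_value lam as A w \<rho>" by linarith
      then show ?thesis by simp
    qed
    then have "ereal (t + eps) \<le> inf_aut_val lam as A w"
      unfolding inf_aut_val_def by (intro Inf_greatest) blast
    then have "ereal (t + eps) \<le> ereal t" using le by (rule order_trans)
    then show False using eps_pos by simp
  qed
qed simp

lemma inf_run_prefix:
  assumes r: "inf_run as A w \<rho>"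
  shows "list_run A (map w [0..<n]) (map \<rho> [0..<Suc n])"
    "weight_indices A (map w [0..<n]) (map \<rho> [0..<Suc n]) = map (inf_run_indices A w \<rho>) [0..<n]"
  using r inf_run_indices[OF r] unfolding list_run_def weight_indices_def inf_run_def inf_run_indices_def
  by (auto simp del: upt_Suc simp: nth_map_upt)

lemma good_word_if_inf_good_runs:
  assumes H: "\<forall>w\<in>inf_words A. \<exists>\<rho>. inf_run as A w \<rho> \<and> padded_value (map (inf_run_indices A w \<rho>) [0..<N]) < t"
    and x: "set x \<subseteq> set (alph A)"
  shows "good_word False good_inf A x"
proof (cases "x = []")
  case True
  have "list_run A [] [init A]" unfolding list_run_def by simp
  moreover have "take N (weight_indices A [] [init A]) \<in> good_inf"
    unfolding good_inf_def index_prefixes_def weight_indices_def using N_pos by simp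
  ultimately show ?thesis unfolding good_word_def True by blast
next
  case False
  define w where "w i = (if i < length x then x ! i else x ! 0)" for i
  have "w \<in> inf_words A" unfolding inf_words_def w_def using x False by auto
  with H obtain \<rho> where r: "inf_run as A w \<rho>" "padded_value (map (inf_run_indices A w \<rho>) [0..<N]) < t"
    by blast
  have x_eq: "map w [0..<length x] = x" unfolding w_def by (intro nth_equalityI) auto
  let ?\<rho> = "map \<rho> [0..<Suc (length x)]"
  have run: "list_run A x ?\<rho>" using inf_run_prefix(1)[OF r(1), of "length x"] x_eq by simp
  have "take N (weight_indices A x ?\<rho>) = map (inf_run_indices A w \<rho>) [0..<min (length x) N]"
    using inf_run_prefix(2)[OF r(1), of "length x"] x_eq by (simp add: take_map min_def)
  then have "take N (weight_indices A x ?\<rho>) \<in> good_inf"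
    using take_weight_indices_in_index_prefixes[OF run] r(2) unfolding good_inf_def
    by (cases "length x < N") (auto simp: min_def)
  with run show ?thesis unfolding good_word_def by blast
qed

lemma take_snoc_in_good_inf:
  assumes "take N (\<tau> @ [i]) \<in> good_inf" "set \<tau> \<subseteq> {..<length as}"
  shows "take N \<tau> \<in> good_inf"
proof (cases "length \<tau> < N")
  case True
  then show ?thesis using assms(2) unfolding good_inf_def index_prefixes_def by simp
next
  case False
  then show ?thesis using assms(1) by simp
qed

definition good_run_prefix :: "dsa \<Rightarrow> (nat \<Rightarrow> nat) \<Rightarrow> nat list \<Rightarrow> bool" where
  "good_run_prefix A w \<rho> \<longleftrightarrow> \<rho> = [] \<or> (list_run A (map w [0..<length \<rho> - 1]) \<rho> \<and>
      take N (weight_indices A (map w [0..<length \<rho> - 1]) \<rho>) \<in> good_inf)"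

lemma good_run_prefix_snocD: "good_run_prefix A w (\<rho> @ [q]) \<Longrightarrow> good_run_prefix A w \<rho>"
proof (cases "\<rho> = []")
  case False
  then obtain m where m: "length \<rho> = Suc m" by (cases \<rho>) auto
  assume "good_run_prefix A w (\<rho> @ [q])"
  moreover have "map w [0..<length (\<rho> @ [q]) - 1] = map w [0..<m] @ [w m]" using m by simp
  ultimately have r: "list_run A (map w [0..<m] @ [w m]) (\<rho> @ [q])"
    and good: "take N (weight_indices A (map w [0..<m] @ [w m]) (\<rho> @ [q])) \<in> good_inf"
    unfolding good_run_prefix_def by auto
  from r have r': "list_run A (map w [0..<m]) \<rho>" using list_run_snoc by blast
  with good have "take N (weight_indices A (map w [0..<m]) \<rho>) \<in> good_inf"
    using weight_indices_snoc[of \<rho> "map w [0..<m]"] m weight_indices_run(2)[OF r']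
    by (auto intro: take_snoc_in_good_inf)
  with r' m show ?thesis unfolding good_run_prefix_def by simp
qed (simp add: good_run_prefix_def)

lemma inf_good_run_if_good_words:
  assumes H: "\<forall>x. set x \<subseteq> set (alph A) \<longrightarrow> good_word False good_inf A x" and w: "w \<in> inf_words A"
  shows "\<exists>\<rho>. inf_run as A w \<rho> \<and> padded_value (map (inf_run_indices A w \<rho>) [0..<N]) < t"
proof -
  obtain M where M: "states_bounded A M" using ex_states_bounded by blast
  have "\<exists>\<rho>. length \<rho> = n \<and> good_run_prefix A w \<rho>" for n
  proof (cases n)
    case (Suc m)
    have "set (map w [0..<m]) \<subseteq> set (alph A)" using w unfolding inf_words_def by auto
    with H obtain \<rho> where "list_run A (map w [0..<m]) \<rho>"
        "take N (weight_indices A (map w [0..<m]) \<rho>) \<in> good_inf"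
      unfolding good_word_def by blast
    moreover from this(1) have "length \<rho> = Suc m" unfolding list_run_def by simp
    ultimately show ?thesis unfolding good_run_prefix_def using Suc by (intro exI[of _ \<rho>]) auto
  qed (simp add: good_run_prefix_def)
  moreover have "set \<rho> \<subseteq> {..M}" if "good_run_prefix A w \<rho>" for \<rho>
    using that list_run_states_le[OF _ M] unfolding good_run_prefix_def by auto
  ultimately obtain f where f: "\<And>n. good_run_prefix A w (map f [0..<n])"
    using koenig_infinite_branch[of "good_run_prefix A w" "{..M}"] good_run_prefix_snocD by blast
  have "f 0 = init A" using f[of 1] unfolding good_run_prefix_def list_run_def by simp
  moreover have "\<exists>i<length as. map_of (tab A) (f j, w j, f (Suc j)) = Some i" for j
    using f[of "Suc (Suc j)"] unfolding good_run_prefix_def list_run_def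
    by (auto simp del: upt_Suc simp: nth_map_upt dest!: spec[of _ j])
  ultimately have run: "inf_run as A w f" unfolding inf_run_def delta_iff by blast
  have "take N (weight_indices A (map w [0..<N]) (map f [0..<Suc N])) \<in> good_inf"
    using f[of "Suc N"] unfolding good_run_prefix_def by (simp del: upt_Suc)
  then have "padded_value (map (inf_run_indices A w f) [0..<N]) < t"
    using inf_run_prefix(2)[OF run, of N] unfolding good_inf_def by simp
  with run show ?thesis by blast
qed

lemma inf_lt_universal_iff:
  "inf_lt_universal lam as t A \<longleftrightarrow> (\<forall>x. set x \<subseteq> set (alph A) \<longrightarrow> good_word False good_inf A x)"
  unfolding inf_lt_universal_def inf_aut_val_less_iff
  using good_word_if_inf_good_runs inf_good_run_if_good_words by blast

lemma inf_le_universal_iff: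
  "inf_le_universal lam as t A \<longleftrightarrow> (\<forall>x. set x \<subseteq> set (alph A) \<longrightarrow> good_word False good_inf A x)"
  unfolding inf_le_universal_def inf_aut_val_le_iff inf_lt_universal_iff[symmetric] inf_lt_universal_def ..

end

section \<open>The decision procedure\<close>

definition state_bound_code :: "nat \<Rightarrow> nat" where
  "state_bound_code c = max (init_code c) (tab_code c)"

lemma states_bounded_dec_dsa: "states_bounded (dec_dsa c) (state_bound_code c)"
  unfolding states_bounded_def
proof (intro conjI allI impI)
  show "init (dec_dsa c) \<le> state_bound_code c" unfolding dec_dsa_components state_bound_code_def by simp
  fix p s q i assume "map_of (tab (dec_dsa c)) (p, s, q) = Some i"
  then have "((p, s, q), i) \<in> set (tab (dec_dsa c))" by (rule map_of_SomeD)
  then obtain e where e: "e \<in> set (list_decode (tab_code c))" "dec_entry e = ((p, s, q), i)"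
    unfolding dec_dsa_components by auto
  have "q = entry_tgt e" using e(2) unfolding dec_entry_eq by simp
  also have "\<dots> \<le> e" unfolding entry_tgt_def by (meson order_trans prod_decode_le)
  also have "\<dots> \<le> tab_code c" using e(1) by (rule member_le_list_encode[of _ "list_decode _", simplified])
  finally show "q \<le> state_bound_code c" unfolding state_bound_code_def by simp
qed

lemma decidable_set_if_computable_pred: "computable_pred 1 (\<lambda>e. P (e 0)) \<Longrightarrow> decidable_set {c. P c}"
proof -
  assume "computable_pred 1 (\<lambda>e. P (e 0))"
  then obtain r where "\<forall>xs. length xs = 1 \<longrightarrow> reval r xs (if P (xs ! 0) then 1 else 0)"
    unfolding computable_pred_def computable_def by blast
  then have "reval r [n] (if n \<in> {c. P c} then 1 else 0)" for n by (auto dest: spec[of _ "[n]"])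
  then show ?thesis unfolding decidable_set_def by blast
qed

context weight_prefix
begin

lemma take_weight_indices_in_iff:
  assumes r: "list_run A w \<rho>"
  shows "take N (weight_indices A w \<rho>) \<in> G \<longleftrightarrow> (\<exists>\<tau>\<in>G. length \<tau> = min (length w) N \<and>
     (\<forall>j<length \<tau>. map_of (tab A) (\<rho> ! j, w ! j, \<rho> ! Suc j) = Some (\<tau> ! j)))"
proof
  assume "take N (weight_indices A w \<rho>) \<in> G"
  then show "\<exists>\<tau>\<in>G. length \<tau> = min (length w) N \<and>
      (\<forall>j<length \<tau>. map_of (tab A) (\<rho> ! j, w ! j, \<rho> ! Suc j) = Some (\<tau> ! j))"
    using weight_indices_run[OF r] by (intro bexI[of _ "take N (weight_indices A w \<rho>)"]) auto
next
  assume "\<exists>\<tau>\<in>G. length \<tau> = min (length w) N \<and>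
      (\<forall>j<length \<tau>. map_of (tab A) (\<rho> ! j, w ! j, \<rho> ! Suc j) = Some (\<tau> ! j))"
  then obtain \<tau> where \<tau>: "\<tau> \<in> G" "length \<tau> = min (length w) N"
      "\<forall>j<length \<tau>. map_of (tab A) (\<rho> ! j, w ! j, \<rho> ! Suc j) = Some (\<tau> ! j)" by blast
  have "\<tau> = take N (weight_indices A w \<rho>)"
    using \<tau>(2,3) weight_indices_run[OF r] by (intro nth_equalityI) auto
  with \<tau>(1) show "take N (weight_indices A w \<rho>) \<in> G" by simp
qed

definition good_run_code :: "nat set \<Rightarrow> bool \<Rightarrow> nat \<Rightarrow> nat \<Rightarrow> nat \<Rightarrow> bool" where
  "good_run_code Gc acc c wc r \<longleftrightarrow> length_code r = Suc (length_code wc) \<and> nth_code r 0 = init_code c \<and>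
     (\<forall>j<length_code wc. \<exists>i<length as. lookup_code c (nth_code r j) (nth_code wc j) (nth_code r (Suc j)) i) \<and>
     (acc \<longrightarrow> member_code (nth_code r (length_code wc)) (final_code c)) \<and>
     (\<exists>s<Suc (Max Gc). s \<in> Gc \<and> length_code s = min (length_code wc) N \<and>
        (\<forall>j<length_code s. lookup_code c (nth_code r j) (nth_code wc j) (nth_code r (Suc j)) (nth_code s j)))"

lemma good_run_code_iff:
  assumes fin: "finite G"
  shows "good_run_code (list_encode ` G) acc c wc r \<longleftrightarrow>
    (let A = dec_dsa c; w = list_decode wc; \<rho> = list_decode r in
      list_run A w \<rho> \<and> (acc \<longrightarrow> \<rho> ! length w \<in> set (final A)) \<and> take N (weight_indices A w \<rho>) \<in> G)"
proof (cases "length (list_decode r) = Suc (length (list_decode wc))")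
  case False
  then show ?thesis unfolding good_run_code_def list_run_def length_code_eq by simp
next
  case len: True
  let ?A = "dec_dsa c" and ?w = "list_decode wc" and ?\<rho> = "list_decode r"
  have r: "nth_code r j = ?\<rho> ! j" if "j \<le> length ?w" for j using that len by (intro nth_code_eq) simp
  have w: "nth_code wc j = ?w ! j" if "j < length ?w" for j using that by (rule nth_code_eq)
  have "(\<exists>s<Suc (Max (list_encode ` G)). s \<in> list_encode ` G \<and> length_code s = min (length_code wc) N \<and>
        (\<forall>j<length_code s. lookup_code c (nth_code r j) (nth_code wc j) (nth_code r (Suc j)) (nth_code s j))) \<longleftrightarrow>
      (\<exists>\<tau>\<in>G. length \<tau> = min (length ?w) N \<and>
        (\<forall>j<length \<tau>. map_of (tab ?A) (?\<rho> ! j, ?w ! j, ?\<rho> ! Suc j) = Some (\<tau> ! j)))"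
    (is "?code \<longleftrightarrow> ?list")
  proof
    assume ?code
    then show ?list using r w nth_code_eq[of _ "list_encode _"] by (auto simp: length_code_eq lookup_code_iff)
  next
    assume ?list
    then obtain \<tau> where "\<tau> \<in> G" "length \<tau> = min (length ?w) N"
        "\<forall>j<length \<tau>. map_of (tab ?A) (?\<rho> ! j, ?w ! j, ?\<rho> ! Suc j) = Some (\<tau> ! j)" by blast
    then show ?code using fin r w nth_code_eq[of _ "list_encode \<tau>"]
      by (intro exI[of _ "list_encode \<tau>"]) (auto simp: length_code_eq lookup_code_iff le_imp_less_Suc)
  qed
  moreover have "(length_code r = Suc (length_code wc) \<and> nth_code r 0 = init_code c \<and>
      (\<forall>j<length_code wc. \<exists>i<length as. lookup_code c (nth_code r j) (nth_code wc j) (nth_code r (Suc j)) i))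
      \<longleftrightarrow> list_run ?A ?w ?\<rho>"
    using len r w by (auto simp: list_run_def length_code_eq lookup_code_iff dec_dsa_components)
  moreover have "(acc \<longrightarrow> member_code (nth_code r (length_code wc)) (final_code c)) \<longleftrightarrow>
      (acc \<longrightarrow> ?\<rho> ! length ?w \<in> set (final ?A))"
    using r by (simp add: length_code_eq member_code_iff dec_dsa_components)
  ultimately show ?thesis
    unfolding good_run_code_def Let_def using take_weight_indices_in_iff[of ?A ?w ?\<rho> G] by blast
qed

definition pumping_bound :: "nat \<Rightarrow> nat" where
  "pumping_bound c = 2 ^ (Suc (state_bound_code c) * card index_prefixes)"

text \<open>Every quantifier of the decision predicate is bounded in terms of the code c: the words that
  need checking are at most pumping_bound c long, and the states of their runs are at most
  state_bound_code c.\<close>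

definition universal_code :: "nat set \<Rightarrow> bool \<Rightarrow> nat \<Rightarrow> bool" where
  "universal_code Gc acc c \<longleftrightarrow>
    (\<forall>wc<Suc (list_code_bound (pumping_bound c) (alph_code c)).
       length_code wc \<le> pumping_bound c \<and>
       (\<forall>j<length_code wc. member_code (nth_code wc j) (alph_code c)) \<longrightarrow>
       (\<exists>r<Suc (list_code_bound (Suc (length_code wc)) (state_bound_code c)).
          good_run_code Gc acc c wc r))"

lemma computable_pred_universal_code: "finite Gc \<Longrightarrow> computable_pred 1 (\<lambda>e. universal_code Gc acc (e 0))"
  unfolding universal_code_def good_run_code_def pumping_bound_def state_bound_code_def
  by (intro computable_intros computable_shift; simp)

lemma universal_code_iff:
  assumes fin: "finite G"
  shows "universal_code (list_encode ` G) acc c \<longleftrightarrow>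
    (\<forall>w. set w \<subseteq> set (alph (dec_dsa c)) \<and> length w \<le> pumping_bound c \<longrightarrow> good_word acc G (dec_dsa c) w)"
proof (intro iffI allI impI)
  fix w assume H: "universal_code (list_encode ` G) acc c"
    and w: "set w \<subseteq> set (alph (dec_dsa c)) \<and> length w \<le> pumping_bound c"
  have "list_encode w < Suc (list_code_bound (pumping_bound c) (alph_code c))"
    using w member_le_list_encode[of _ "list_decode (alph_code c)"]
    unfolding dec_dsa_components by (auto intro!: le_imp_less_Suc list_encode_le_list_code_bound)
  moreover have "\<forall>j<length_code (list_encode w). member_code (nth_code (list_encode w) j) (alph_code c)"
    using w unfolding length_code_eq member_code_iff dec_dsa_components by (auto simp: nth_code_eq)
  ultimately obtain r where "good_run_code (list_encode ` G) acc c (list_encode w) r"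
    using H w unfolding universal_code_def length_code_eq by auto
  then show "good_word acc G (dec_dsa c) w"
    unfolding good_run_code_iff[OF fin] good_word_def Let_def by auto
next
  assume H: "\<forall>w. set w \<subseteq> set (alph (dec_dsa c)) \<and> length w \<le> pumping_bound c \<longrightarrow>
      good_word acc G (dec_dsa c) w"
  show "universal_code (list_encode ` G) acc c" unfolding universal_code_def
  proof (intro allI impI)
    fix wc assume "length_code wc \<le> pumping_bound c \<and>
      (\<forall>j<length_code wc. member_code (nth_code wc j) (alph_code c))"
    then have "set (list_decode wc) \<subseteq> set (alph (dec_dsa c))"
      "length (list_decode wc) \<le> pumping_bound c"
      unfolding length_code_eq member_code_iff dec_dsa_components by (auto simp: nth_code_eq in_set_conv_nth)
    with H obtain \<rho> where \<rho>: "list_run (dec_dsa c) (list_decode wc) \<rho>"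
        "acc \<longrightarrow> \<rho> ! length (list_decode wc) \<in> set (final (dec_dsa c))"
        "take N (weight_indices (dec_dsa c) (list_decode wc) \<rho>) \<in> G"
      unfolding good_word_def by blast
    then have "list_encode \<rho> < Suc (list_code_bound (Suc (length_code wc)) (state_bound_code c))"
      using list_run_states_le[OF \<rho>(1) states_bounded_dec_dsa]
      by (auto simp: length_code_eq list_run_def intro!: le_imp_less_Suc list_encode_le_list_code_bound)
    moreover have "good_run_code (list_encode ` G) acc c wc (list_encode \<rho>)"
      unfolding good_run_code_iff[OF fin] Let_def using \<rho> by simp
    ultimately show "\<exists>r<Suc (list_code_bound (Suc (length_code wc)) (state_bound_code c)).
        good_run_code (list_encode ` G) acc c wc r" by blast
  qed
qed

lemma decidable_good_words:
  assumes "finite G"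
  shows "decidable_dsa_prop (\<lambda>A. \<forall>w. set w \<subseteq> set (alph A) \<longrightarrow> good_word acc G A w)"
proof -
  have "(\<forall>w. set w \<subseteq> set (alph (dec_dsa c)) \<longrightarrow> good_word acc G (dec_dsa c) w) \<longleftrightarrow>
      universal_code (list_encode ` G) acc c" for c
    unfolding universal_code_iff[OF assms]
    by (rule all_good_words_iff_short[OF states_bounded_dec_dsa]) (simp add: pumping_bound_def)
  then show ?thesis
    unfolding decidable_dsa_prop_def
    using decidable_set_if_computable_pred[OF computable_pred_universal_code] assms by simp
qed

end

theorem theorem30:
  fixes lam t :: real and as :: "real list"
  assumes "lam \<in> \<rat>" and "0 < lam" and "lam < 1"
    and "t \<in> \<rat>" and "\<forall>a \<in> set as. a \<in> \<rat>"
    and "\<not> (\<exists>w. gtds_solution lam t as w)"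
  shows "decidable_dsa_prop (fin_lt_universal lam as t)
       \<and> decidable_dsa_prop (fin_le_universal lam as t)
       \<and> decidable_dsa_prop (inf_lt_universal lam as t)
       \<and> decidable_dsa_prop (inf_le_universal lam as t)"
proof -
  interpret discount_factor lam using assms(2,3) by unfold_locales
  obtain eps where eps: "eps > 0" "\<And>s. (\<forall>i. s i \<in> set as) \<Longrightarrow> eps \<le> \<bar>dsum s - t\<bar>"
    using gtds_gap[OF assms(6)] by blast
  obtain N where N: "N \<ge> 1" "3 * weight_bound as / (1 - lam) * lam ^ N < eps"
    using ex_power_less[OF eps(1)] by blast
  interpret gtds_approximation lam as N t eps
    using eps N by unfold_locales (auto simp: mult_ac)
  have "finite good_lt" "finite good_le" "finite good_inf"
    using finite_index_prefixes unfolding good_lt_def good_le_def good_inf_def by auto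
  then show ?thesis
    unfolding fin_lt_universal_iff fin_le_universal_iff inf_lt_universal_iff inf_le_universal_iff
    by (intro conjI decidable_good_words)
qed

end
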